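(* Let $\mathcal{I}$ be any ideal of the multiloop algebra $\mathcal{L}$ and let $I=I(\mathcal{I})\subseteq R$. Then $$\mathcal{I}=\mathcal{L}\cap(\mathfrak{g}\otimes I)=\bigoplus_{\bar k\in G}\mathfrak{g}_{\bar k}\otimes I_{\bar k},$$ where $I_{\bar k}=I\cap R_{\bar k}$.
   Context: $F$ is an algebraically closed field of characteristic zero; $\mathfrak{g}$ is a finite-dimensional simple Lie algebra over $F$; $\sigma_1,\dots,\sigma_N$ are pairwise commuting automorphisms of $\mathfrak{g}$ of finite orders $m_1,\dots,m_N$; for each $i$, $\xi_i\in F$ is a fixed primitive $m_i$-th root of unity. Let $G=\mathbb{Z}/m_1\mathbb{Z}\times\cdots\times\mathbb{Z}/m_N\mathbb{Z}$ and write $\bar k$ for the image of $k\in\mathbb{Z}^N$ in $G$. Set $\mathfrak{g}_{\bar k}=\{x\in\mathfrak{g}: \sigma_i x=\xi_i^{k_i}x \text{ for } i=1,\dots,N\}$. Let $R=F[t_1^{\pm1},\dots,t_N^{\pm1}]$, $t^k=t_1^{k_1}\cdots t_N^{k_N}$, $R_{\bar 0}=F[t_1^{\pm m_1},\dots,t_N^{\pm m_N}]$ and $R_{\bar k}=t^kR_{\bar 0}$. The multiloop algebra is $\mathcal{L}=\bigoplus_{k\in\mathbb{Z}^N}\mathfrak{g}_{\bar k}\otimes Ft^k=\bigoplus_{\bar k\in G}\mathfrak{g}_{\bar k}\otimes R_{\bar k}\subseteq \mathfrak{g}\otimes R$, with bracket $[x\otimes f,y\otimes g]=[x,y]\otimes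 fg$. For each $\bar k\in G$ fix a basis $\{x_{\bar k j}\}_j$ of $\mathfrak{g}_{\bar k}$, and let $\pi_{\bar kj}:\mathcal{L}\to R_{\bar k}$ be the projection onto the summand $Fx_{\bar kj}\otimes R_{\bar k}$ of $\mathcal{L}=\bigoplus_{\bar k}\bigoplus_j Fx_{\bar kj}\otimes R_{\bar k}$ followed by $x_{\bar kj}\otimes f\mapsto f$. For an ideal $\mathcal{I}$ of $\mathcal{L}$, $I(\mathcal{I})$ denotes the ideal of $R$ generated by $\bigcup_{\bar k\in G}\bigcup_j \pi_{\bar kj}(\mathcal{I})$ (it is independent of the chosen bases and $G$-graded). *)

theory Defs
  imports Main "HOL-Computational_Algebra.Polynomial"
begin

definition alg_closed_field :: "'f::field itself \<Rightarrow> bool" where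
  "alg_closed_field _ \<longleftrightarrow> (\<forall>p::'f poly. degree p > 0 \<longrightarrow> (\<exists>x. poly p x = 0))"

(* finite-dimensional Lie algebra over 'f, carried by the whole type 'v *)
definition fd_lie_algebra ::
  "('f::field \<Rightarrow> 'v::ab_group_add \<Rightarrow> 'v) \<Rightarrow> ('v \<Rightarrow> 'v \<Rightarrow> 'v) \<Rightarrow> bool" where
  "fd_lie_algebra sc br \<longleftrightarrow>
     (\<exists>Bs. finite_dimensional_vector_space sc Bs) \<and>
     (\<forall>x y z. br (x + y) z = br x z + br y z) \<and>
     (\<forall>x y z. br x (y + z) = br x y + br x z) \<and>
     (\<forall>a x y. br (sc a x) y = sc a (br x y)) \<and>
     (\<forall>a x y. br x (sc a y) = sc a (br x y)) \<and>
     (\<forall>x. br x x = 0) \<and>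
     (\<forall>x y z. br x (br y z) + br y (br z x) + br z (br x y) = 0)"

definition lie_ideal ::
  "('f::field \<Rightarrow> 'v::ab_group_add \<Rightarrow> 'v) \<Rightarrow> ('v \<Rightarrow> 'v \<Rightarrow> 'v) \<Rightarrow> 'v set \<Rightarrow> bool" where
  "lie_ideal sc br J \<longleftrightarrow> module.subspace sc J \<and> (\<forall>x\<in>J. \<forall>y. br y x \<in> J)"

definition simple_lie_algebra ::
  "('f::field \<Rightarrow> 'v::ab_group_add \<Rightarrow> 'v) \<Rightarrow> ('v \<Rightarrow> 'v \<Rightarrow> 'v) \<Rightarrow> bool" where
  "simple_lie_algebra sc br \<longleftrightarrow> fd_lie_algebra sc br \<and> (\<exists>x y. br x y \<noteq> 0) \<and>
     (\<forall>J. lie_ideal sc br J \<longrightarrow> J = {0} \<or> J = UNIV)"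

definition lie_automorphism ::
  "('f::field \<Rightarrow> 'v::ab_group_add \<Rightarrow> 'v) \<Rightarrow> ('v \<Rightarrow> 'v \<Rightarrow> 'v) \<Rightarrow> ('v \<Rightarrow> 'v) \<Rightarrow> bool" where
  "lie_automorphism sc br s \<longleftrightarrow> bij s \<and> (\<forall>x y. s (x + y) = s x + s y) \<and>
     (\<forall>a x. s (sc a x) = sc a (s x)) \<and> (\<forall>x y. s (br x y) = br (s x) (s y))"

definition has_order :: "('v \<Rightarrow> 'v) \<Rightarrow> nat \<Rightarrow> bool" where
  "has_order s n \<longleftrightarrow> n > 0 \<and> (s ^^ n) = id \<and> (\<forall>j. 0 < j \<and> j < n \<longrightarrow> (s ^^ j) \<noteq> id)"

definition primitive_root :: "'f::field \<Rightarrow> nat \<Rightarrow> bool" where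
  "primitive_root z n \<longleftrightarrow> n > 0 \<and> z ^ n = 1 \<and> (\<forall>j. 0 < j \<and> j < n \<longrightarrow> z ^ j \<noteq> 1)"

(* k :: nat \<Rightarrow> int represents an element of Z^N (coordinates i < N; zero beyond) *)
definition valid_exp :: "nat \<Rightarrow> (nat \<Rightarrow> int) \<Rightarrow> bool" where
  "valid_exp N k \<longleftrightarrow> (\<forall>i\<ge>N. k i = 0)"

(* image \<bar>k\<bar> of k in G = Z/m_1 \<times> ... \<times> Z/m_N, canonical representative *)
definition cls :: "nat \<Rightarrow> (nat \<Rightarrow> nat) \<Rightarrow> (nat \<Rightarrow> int) \<Rightarrow> (nat \<Rightarrow> int)" where
  "cls N m k = (\<lambda>i. if i < N then k i mod int (m i) else 0)"

(* R = F[t_1^{\<pm>1},...,t_N^{\<pm>1}]: f k is the coefficient of t^k *)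
definition laurent :: "nat \<Rightarrow> ((nat \<Rightarrow> int) \<Rightarrow> 'f::zero) set" where
  "laurent N = {f. finite {k. f k \<noteq> 0} \<and> (\<forall>k. f k \<noteq> 0 \<longrightarrow> valid_exp N k)}"

definition lmult :: "((nat \<Rightarrow> int) \<Rightarrow> 'f::comm_ring_1) \<Rightarrow> ((nat \<Rightarrow> int) \<Rightarrow> 'f) \<Rightarrow> (nat \<Rightarrow> int) \<Rightarrow> 'f" where
  "lmult f g = (\<lambda>k. \<Sum>a\<in>{a. f a \<noteq> 0}. f a * g (\<lambda>i. k i - a i))"

definition ring_ideal :: "nat \<Rightarrow> ((nat \<Rightarrow> int) \<Rightarrow> 'f::comm_ring_1) set \<Rightarrow> bool" where
  "ring_ideal N J \<longleftrightarrow> J \<subseteq> laurent N \<and> (\<lambda>_. 0) \<in> J \<and>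
     (\<forall>f\<in>J. \<forall>g\<in>J. (\<lambda>k. f k + g k) \<in> J) \<and>
     (\<forall>f\<in>laurent N. \<forall>g\<in>J. lmult f g \<in> J)"

definition gen_ideal :: "nat \<Rightarrow> ((nat \<Rightarrow> int) \<Rightarrow> 'f::comm_ring_1) set \<Rightarrow> ((nat \<Rightarrow> int) \<Rightarrow> 'f) set" where
  "gen_ideal N S = \<Inter> {J. ring_ideal N J \<and> S \<subseteq> J}"

definition laurent_cls :: "nat \<Rightarrow> (nat \<Rightarrow> nat) \<Rightarrow> (nat \<Rightarrow> int) \<Rightarrow> ((nat \<Rightarrow> int) \<Rightarrow> 'f::zero) set" where
  "laurent_cls N m c = {f \<in> laurent N. \<forall>k. f k \<noteq> 0 \<longrightarrow> cls N m k = c}"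

(* g \<otimes> R, realised as finitely supported functions Z^N \<Rightarrow> g  (X k = coefficient of t^k) *)
definition gR :: "nat \<Rightarrow> ((nat \<Rightarrow> int) \<Rightarrow> 'v::zero) set" where
  "gR N = {X. finite {k. X k \<noteq> 0} \<and> (\<forall>k. X k \<noteq> 0 \<longrightarrow> valid_exp N k)}"

definition tns :: "('f \<Rightarrow> 'v \<Rightarrow> 'v) \<Rightarrow> 'v \<Rightarrow> ((nat \<Rightarrow> int) \<Rightarrow> 'f) \<Rightarrow> (nat \<Rightarrow> int) \<Rightarrow> 'v" where
  "tns sc x f = (\<lambda>k. sc (f k) x)"

definition g_tensor :: "('f \<Rightarrow> 'v::comm_monoid_add \<Rightarrow> 'v) \<Rightarrow> ((nat \<Rightarrow> int) \<Rightarrow> 'f) set \<Rightarrow> ((nat \<Rightarrow> int) \<Rightarrow> 'v) set" where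
  "g_tensor sc I = {(\<lambda>k. \<Sum>j<n. tns sc (xs j) (fs j) k) | (n::nat) xs fs. \<forall>j<n. fs j \<in> I}"

definition gR_bracket :: "('v \<Rightarrow> 'v \<Rightarrow> 'v::comm_monoid_add) \<Rightarrow> ((nat \<Rightarrow> int) \<Rightarrow> 'v) \<Rightarrow> ((nat \<Rightarrow> int) \<Rightarrow> 'v) \<Rightarrow> (nat \<Rightarrow> int) \<Rightarrow> 'v" where
  "gR_bracket br X Y = (\<lambda>k. \<Sum>a\<in>{a. X a \<noteq> 0}. br (X a) (Y (\<lambda>i. k i - a i)))"

definition g_cls :: "('f::field \<Rightarrow> 'v \<Rightarrow> 'v) \<Rightarrow> nat \<Rightarrow> (nat \<Rightarrow> 'v \<Rightarrow> 'v) \<Rightarrow> (nat \<Rightarrow> 'f) \<Rightarrow> (nat \<Rightarrow> int) \<Rightarrow> 'v set" where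
  "g_cls sc N \<sigma> \<xi> c = {x. \<forall>i<N. \<sigma> i x = sc (\<xi> i powi c i) x}"

definition multiloop :: "('f::field \<Rightarrow> 'v::zero \<Rightarrow> 'v) \<Rightarrow> nat \<Rightarrow> (nat \<Rightarrow> 'v \<Rightarrow> 'v) \<Rightarrow> (nat \<Rightarrow> 'f) \<Rightarrow> ((nat \<Rightarrow> int) \<Rightarrow> 'v) set" where
  "multiloop sc N \<sigma> \<xi> = {X \<in> gR N. \<forall>k. X k \<in> g_cls sc N \<sigma> \<xi> k}"

definition multiloop_ideal :: "('f::field \<Rightarrow> 'v::ab_group_add \<Rightarrow> 'v) \<Rightarrow> ('v \<Rightarrow> 'v \<Rightarrow> 'v) \<Rightarrow> nat \<Rightarrow> (nat \<Rightarrow> 'v \<Rightarrow> 'v) \<Rightarrow> (nat \<Rightarrow> 'f) \<Rightarrow> ((nat \<Rightarrow> int) \<Rightarrow> 'v) set \<Rightarrow> bool" where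
  "multiloop_ideal sc br N \<sigma> \<xi> J \<longleftrightarrow> J \<subseteq> multiloop sc N \<sigma> \<xi> \<and> (\<lambda>_. 0) \<in> J \<and>
     (\<forall>X\<in>J. \<forall>Y\<in>J. (\<lambda>k. X k + Y k) \<in> J) \<and>
     (\<forall>a. \<forall>X\<in>J. (\<lambda>k. sc a (X k)) \<in> J) \<and>
     (\<forall>X\<in>multiloop sc N \<sigma> \<xi>. \<forall>Y\<in>J. gR_bracket br X Y \<in> J)"

(* \<pi>_{c,v}: coordinate w.r.t. basis vector v of the chosen basis B c of g_c, on the class-c part *)
definition proj :: "('f::field \<Rightarrow> 'v::ab_group_add \<Rightarrow> 'v) \<Rightarrow> nat \<Rightarrow> (nat \<Rightarrow> nat) \<Rightarrow> ((nat \<Rightarrow> int) \<Rightarrow> 'v set) \<Rightarrow> (nat \<Rightarrow> int) \<Rightarrow> 'v \<Rightarrow> ((nat \<Rightarrow> int) \<Rightarrow> 'v) \<Rightarrow> (nat \<Rightarrow> int) \<Rightarrow> 'f" where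
  "proj sc N m B c v X = (\<lambda>k. if valid_exp N k \<and> cls N m k = c then module.representation sc (B c) (X k) v else 0)"

definition assoc_ideal :: "('f::field \<Rightarrow> 'v::ab_group_add \<Rightarrow> 'v) \<Rightarrow> nat \<Rightarrow> (nat \<Rightarrow> nat) \<Rightarrow> ((nat \<Rightarrow> int) \<Rightarrow> 'v set) \<Rightarrow> ((nat \<Rightarrow> int) \<Rightarrow> 'v) set \<Rightarrow> ((nat \<Rightarrow> int) \<Rightarrow> 'f) set" where
  "assoc_ideal sc N m B J = gen_ideal N
     {proj sc N m B (cls N m k) v X | k v X. valid_exp N k \<and> v \<in> B (cls N m k) \<and> X \<in> J}"

definition graded_tensor :: "('f::field \<Rightarrow> 'v::ab_group_add \<Rightarrow> 'v) \<Rightarrow> nat \<Rightarrow> (nat \<Rightarrow> nat) \<Rightarrow> (nat \<Rightarrow> 'v \<Rightarrow> 'v) \<Rightarrow> (nat \<Rightarrow> 'f) \<Rightarrow> ((nat \<Rightarrow> int) \<Rightarrow> 'f) set \<Rightarrow> ((nat \<Rightarrow> int) \<Rightarrow> 'v) set" where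
  "graded_tensor sc N m \<sigma> \<xi> I = {(\<lambda>k. \<Sum>j<n. tns sc (xs j) (fs j) k) | (n::nat) xs fs.
      \<forall>j<n. \<exists>c. valid_exp N c \<and> xs j \<in> g_cls sc N \<sigma> \<xi> c \<and> fs j \<in> I \<inter> laurent_cls N m c}"

end

theory Submission
  imports Defs
begin

(* 1. Burnside's theorem (burnside): for a simple Lie algebra g over an algebraically
      closed field, every associative algebra of linear maps of g containing all ad x is
      End(g).  It follows from Schur's lemma (commuting maps are scalars, since eigenvectors
      exist) and Jacobson density.
   2. The grading: averaging over the powers of \<sigma>_i projects onto its eigenspaces, and
      composing these gives projections gproj c of g onto g_c with \<Sum>_c gproj c = id.
   3. For \<phi> \<in> End(g) and a \<in> Z^N, loop_op \<phi> a multiplies by t^a, applies \<phi> to the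
      coefficients and projects them to the right graded pieces.  The \<phi> whose operators
      preserve \<I> form an algebra containing ad g, hence all of End(g) by step 1; in
      particular w \<otimes> t^a \<pi>_{c,v}(Y) \<in> \<I> for Y \<in> \<I> and w \<in> g_d (generator_action).
   4. Two ideals of R containing the generators \<pi>_{c,v}(Y) of I show that I is graded
      (assoc_sub_Jgraded) and that g_c \<otimes> I_c \<subseteq> \<I> (assoc_sub_Jact).  The inclusions
      \<I> \<subseteq> \<L> \<inter> (g \<otimes> I) \<subseteq> \<Oplus> g_c \<otimes> I_c \<subseteq> \<I> then give the theorem. *)

locale lie_space =
  fixes sc :: "'f::field \<Rightarrow> 'v::ab_group_add \<Rightarrow> 'v"
    and br :: "'v \<Rightarrow> 'v \<Rightarrow> 'v"
    and Bs :: "'v set"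
  assumes fdv: "finite_dimensional_vector_space sc Bs"
    and lie: "fd_lie_algebra sc br"
begin

sublocale V: finite_dimensional_vector_space sc Bs by (rule fdv)

definition lin :: "('v \<Rightarrow> 'v) \<Rightarrow> bool" where
  "lin f \<longleftrightarrow> (\<forall>x y. f (x + y) = f x + f y) \<and> (\<forall>a x. f (sc a x) = sc a (f x))"

lemma lin_add: "lin f \<Longrightarrow> f (x + y) = f x + f y" by (simp add: lin_def)
lemma lin_scale: "lin f \<Longrightarrow> f (sc a x) = sc a (f x)" by (simp add: lin_def)
lemma lin_zero: "lin f \<Longrightarrow> f 0 = 0"
  by (metis lin_scale V.scale_zero_left)
lemma lin_sum: "lin f \<Longrightarrow> f (\<Sum>j\<in>S. g j) = (\<Sum>j\<in>S. f (g j))"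
  by (induction S rule: infinite_finite_induct) (auto simp: lin_zero lin_add)
lemma lin_neg: "lin f \<Longrightarrow> f (- x) = - f x"
  by (metis lin_scale V.scale_minus_left V.scale_one)
lemma lin_diff: "lin f \<Longrightarrow> f (x - y) = f x - f y"
  by (metis diff_conv_add_uminus lin_add lin_neg)
lemma lin_comp: "lin f \<Longrightarrow> lin g \<Longrightarrow> lin (f \<circ> g)" by (simp add: lin_def)
lemma lin_plus: "lin f \<Longrightarrow> lin g \<Longrightarrow> lin (\<lambda>x. f x + g x)"
  by (simp add: lin_def V.scale_right_distrib algebra_simps)
lemma lin_scf: "lin f \<Longrightarrow> lin (\<lambda>x. sc r (f x))"
  by (simp add: lin_def V.scale_right_distrib V.scale_left_commute)
lemma lin_sumf: "(\<And>j. j \<in> S \<Longrightarrow> lin (f j)) \<Longrightarrow> lin (\<lambda>x. \<Sum>j\<in>S. f j x)"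
  by (induction S rule: infinite_finite_induct)
     (auto simp: lin_def sum.distrib V.scale_sum_right V.scale_right_distrib)
lemma lin_pow: "lin f \<Longrightarrow> lin (f ^^ n)"
  by (induction n) (auto simp: lin_def)

lemma lin_eq_on_basis:
  assumes F: "lin F" and L: "lin L" and eq: "\<And>b. b \<in> Bs \<Longrightarrow> F b = L b"
  shows "F = L"
proof
  fix x
  have rep: "x = (\<Sum>b\<in>Bs. sc (V.representation Bs x b) b)"
    using V.sum_representation_eq[of Bs x Bs] V.independent_Basis V.span_Basis V.finite_Basis
    by simp
  have "F x = (\<Sum>b\<in>Bs. sc (V.representation Bs x b) (F b))"
    by (subst rep) (simp add: lin_sum lin_scale F)
  also have "\<dots> = (\<Sum>b\<in>Bs. sc (V.representation Bs x b) (L b))" by (simp add: eq)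
  also have "\<dots> = L x" by (subst (2) rep) (simp add: lin_sum lin_scale L)
  finally show "F x = L x" .
qed

lemma br_props:
  "br (x + y) z = br x z + br y z" "br x (y + z) = br x y + br x z"
  "br (sc a x) y = sc a (br x y)" "br x (sc a y) = sc a (br x y)"
  using lie by (auto simp: fd_lie_algebra_def)

lemma lin_br: "lin (br x)" by (simp add: lin_def br_props)

lemma br_zero_left [simp]: "br 0 y = 0"
  by (metis V.scale_zero_left br_props(3))

lemma br_sum_left: "br (\<Sum>c\<in>S. f c) y = (\<Sum>c\<in>S. br (f c) y)"
  by (induction S rule: infinite_finite_induct) (auto simp: br_props)

end

section \<open>Simple Lie algebras and Burnside's theorem\<close>

locale simple_lie = lie_space sc br Bs
  for sc :: "'f::field \<Rightarrow> 'v::ab_group_add \<Rightarrow> 'v" and br Bs +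
  assumes acf: "alg_closed_field TYPE('f)"
    and sla: "simple_lie_algebra sc br"
begin

lemma nontriv: "\<exists>x y. br x y \<noteq> 0" using sla by (simp add: simple_lie_algebra_def)

lemma simple: "lie_ideal sc br J \<Longrightarrow> J = {0} \<or> J = UNIV"
  using sla by (simp add: simple_lie_algebra_def)

definition peval :: "'f poly \<Rightarrow> ('v \<Rightarrow> 'v) \<Rightarrow> 'v \<Rightarrow> 'v" where
  "peval p \<theta> w = (\<Sum>i\<le>degree p. sc (coeff p i) ((\<theta> ^^ i) w))"

lemma peval_bound: assumes "degree p \<le> n"
  shows "peval p \<theta> w = (\<Sum>i\<le>n. sc (coeff p i) ((\<theta> ^^ i) w))"
  unfolding peval_def
  by (rule sum.mono_neutral_left) (use assms in \<open>auto simp: coeff_eq_0\<close>)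

lemma peval_linear_factor: assumes th: "lin \<theta>"
  shows "peval (pCons 0 q - smult l q) \<theta> w = \<theta> (peval q \<theta> w) - sc l (peval q \<theta> w)"
proof -
  define n where "n = degree q"
  have deg: "degree (pCons 0 q - smult l q) \<le> Suc n"
    by (metis degree_diff_le degree_pCons_le degree_smult_le le_Suc_eq n_def)
  have "peval (pCons 0 q - smult l q) \<theta> w =
     (\<Sum>i\<le>Suc n. sc (coeff (pCons 0 q) i) ((\<theta> ^^ i) w)) - (\<Sum>i\<le>Suc n. sc (l * coeff q i) ((\<theta> ^^ i) w))"
    unfolding peval_bound[OF deg]
    by (simp add: V.scale_left_diff_distrib sum_subtractf del: sum.atMost_Suc)
  also have "(\<Sum>i\<le>Suc n. sc (l * coeff q i) ((\<theta> ^^ i) w)) = sc l (peval q \<theta> w)"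
  proof -
    have "peval q \<theta> w = (\<Sum>i\<le>Suc n. sc (coeff q i) ((\<theta> ^^ i) w))"
      by (rule peval_bound) (simp add: n_def)
    then show ?thesis
      by (simp add: V.scale_sum_right V.scale_scale del: sum.atMost_Suc)
  qed
  also have "(\<Sum>i\<le>Suc n. sc (coeff (pCons 0 q) i) ((\<theta> ^^ i) w)) = \<theta> (peval q \<theta> w)"
    unfolding sum.atMost_Suc_shift
    by (simp add: peval_def n_def lin_sum[OF th] lin_scale[OF th] del: sum.atMost_Suc)
  finally show ?thesis by simp
qed

(* If a nonzero polynomial kills a nonzero vector, splitting off linear factors
   (possible since the field is algebraically closed) yields an eigenvector. *)
lemma eigenvector_from_poly:
  assumes th: "lin \<theta>"
  shows "p \<noteq> 0 \<Longrightarrow> w \<noteq> 0 \<Longrightarrow> peval p \<theta> w = 0 \<Longrightarrow> \<exists>l u. u \<noteq> 0 \<and> \<theta> u = sc l u"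
proof (induction "degree p" arbitrary: p w rule: less_induct)
  case less
  show ?case
  proof (cases "degree p = 0")
    case True
    then have "peval p \<theta> w = sc (coeff p 0) w" by (simp add: peval_def)
    moreover have "coeff p 0 \<noteq> 0" using True less.prems(1) by (metis degree_0_id pCons_0_0)
    ultimately show ?thesis using less.prems by simp
  next
    case False
    obtain x where "poly p x = 0" using acf False by (auto simp: alg_closed_field_def)
    then obtain q where q: "p = [:-x, 1:] * q" by (metis poly_eq_0_iff_dvd dvdE)
    have qnz: "q \<noteq> 0" using q less.prems by auto
    have "degree ([:-x, 1:] * q) = degree [:-x, 1:] + degree q"
      by (rule degree_mult_eq) (simp_all add: qnz)
    then have dq: "degree q < degree p" unfolding q by simp
    show ?thesis
    proof (cases "peval q \<theta> w = 0")
      case True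
      then show ?thesis using less.hyps[OF dq qnz less.prems(2)] by blast
    next
      case False
      have "\<theta> (peval q \<theta> w) - sc x (peval q \<theta> w) = 0"
        using less.prems(3) q peval_linear_factor[OF th, of q x w] by simp
      then show ?thesis using False by (intro exI[of _ x] exI[of _ "peval q \<theta> w"]) simp
    qed
  qed
qed

lemma peval_diff: "peval (p - q) \<theta> w = peval p \<theta> w - peval q \<theta> w"
proof -
  define n where "n = max (degree p) (degree q)"
  have "degree (p - q) \<le> n" "degree p \<le> n" "degree q \<le> n"
    by (auto simp: n_def degree_diff_le_max)
  then show ?thesis
    by (simp add: peval_bound[of _ n] V.scale_left_diff_distrib sum_subtractf)
qed

lemma peval_monom: "peval (monom 1 j) \<theta> w = (\<theta> ^^ j) w"
proof -
  have "peval (monom 1 j) \<theta> w = (\<Sum>i\<le>j. if i = j then (\<theta> ^^ i) w else 0)"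
    unfolding peval_def by (intro sum.cong) (auto simp: coeff_monom degree_monom_eq)
  then show ?thesis by simp
qed

(* Every linear map of the nonzero finite-dimensional space has an eigenvector:
   the vectors w, \<theta> w, ..., \<theta>^n w (n = dim) are dependent, giving a polynomial
   that kills w. *)
lemma eigen_exists: fixes w :: 'v assumes th: "lin \<theta>" and w: "w \<noteq> 0"
  shows "\<exists>l u. u \<noteq> 0 \<and> \<theta> u = sc l u"
proof -
  define n where "n = V.dim (UNIV :: 'v set)"
  define f where "f i = (\<theta> ^^ i) w" for i
  have "\<exists>p. p \<noteq> 0 \<and> peval p \<theta> w = 0"
  proof (cases "inj_on f {..n}")
    case False
    then obtain i j where ij: "i \<le> n" "j \<le> n" "i \<noteq> j" "f i = f j"
      by (auto simp: inj_on_def)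
    have "monom (1::'f) i \<noteq> monom 1 j" using ij(3) by (metis monom_eq_iff' one_neq_zero)
    then show ?thesis using ij
      by (intro exI[of _ "monom 1 i - monom 1 j"]) (simp add: peval_diff peval_monom f_def)
  next
    case True
    let ?S = "f ` {..n}"
    have "card ?S = Suc n" using True by (simp add: card_image)
    then have "V.dependent ?S"
      using V.independent_card_le_dim[of ?S UNIV] n_def by auto
    then obtain u where u: "\<exists>v\<in>?S. u v \<noteq> 0" "(\<Sum>v\<in>?S. sc (u v) v) = 0"
      using V.dependent_finite[of ?S] by auto
    define p where "p = Poly (map (\<lambda>i. u (f i)) [0..<Suc n])"
    have cp: "coeff p i = (if i \<le> n then u (f i) else 0)" for i
      by (simp add: p_def nth_default_def del: upt_Suc)
    have dp: "degree p \<le> n" by (rule degree_le) (simp add: cp)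
    have "peval p \<theta> w = (\<Sum>i\<le>n. sc (u (f i)) (f i))"
      by (simp add: peval_bound[OF dp] cp f_def)
    also have "\<dots> = (\<Sum>v\<in>?S. sc (u v) v)" by (simp add: sum.reindex[OF True])
    finally have "peval p \<theta> w = 0" using u by simp
    moreover have "p \<noteq> 0" using u(1) cp by (metis atMost_iff coeff_0 imageE)
    ultimately show ?thesis by blast
  qed
  then show ?thesis using eigenvector_from_poly[OF th _ w] by blast
qed

definition ad_algebra :: "('v \<Rightarrow> 'v) set \<Rightarrow> bool" where
  "ad_algebra Q \<longleftrightarrow> (\<forall>\<phi>\<in>Q. lin \<phi>) \<and> (\<forall>\<phi>\<in>Q. \<forall>\<psi>\<in>Q. (\<lambda>x. \<phi> x + \<psi> x) \<in> Q) \<and>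
     (\<forall>\<phi>\<in>Q. \<forall>r. (\<lambda>x. sc r (\<phi> x)) \<in> Q) \<and> (\<forall>\<phi>\<in>Q. \<forall>\<psi>\<in>Q. \<phi> \<circ> \<psi> \<in> Q) \<and> (\<forall>x. br x \<in> Q)"

context
  fixes Q assumes Q: "ad_algebra Q"
begin

lemma Q_lin: "\<phi> \<in> Q \<Longrightarrow> lin \<phi>" using Q by (simp add: ad_algebra_def)
lemma Q_add: "\<phi> \<in> Q \<Longrightarrow> \<psi> \<in> Q \<Longrightarrow> (\<lambda>x. \<phi> x + \<psi> x) \<in> Q" using Q by (simp add: ad_algebra_def)
lemma Q_scale: "\<phi> \<in> Q \<Longrightarrow> (\<lambda>x. sc r (\<phi> x)) \<in> Q" using Q by (simp add: ad_algebra_def)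
lemma Q_comp: "\<phi> \<in> Q \<Longrightarrow> \<psi> \<in> Q \<Longrightarrow> (\<lambda>x. \<phi> (\<psi> x)) \<in> Q"
  using Q by (simp add: ad_algebra_def comp_def)
lemma Q_br: "br x \<in> Q" using Q by (simp add: ad_algebra_def)
lemma Q_zero: "(\<lambda>x. 0) \<in> Q"
  using Q_scale[OF Q_br, of 0 0] by simp
lemma Q_sum: "finite S \<Longrightarrow> (\<And>j. j \<in> S \<Longrightarrow> f j \<in> Q) \<Longrightarrow> (\<lambda>x. \<Sum>j\<in>S. f j x) \<in> Q"
  by (induction S rule: finite_induct) (auto simp: Q_zero Q_add)

(* Since g is simple, its only Q-invariant subspaces (= ideals) are 0 and g. *)
lemma invariant_subspace:
  assumes "V.subspace W" "\<And>\<phi> w. \<phi> \<in> Q \<Longrightarrow> w \<in> W \<Longrightarrow> \<phi> w \<in> W"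
  shows "W = {0} \<or> W = UNIV"
  using simple[of W] assms Q_br by (auto simp: lie_ideal_def)

definition left_ideal :: "('v \<Rightarrow> 'v) set \<Rightarrow> bool" where
  "left_ideal A \<longleftrightarrow> A \<subseteq> Q \<and> (\<lambda>x. 0) \<in> A \<and> (\<forall>\<phi>\<in>A. \<forall>\<psi>\<in>A. (\<lambda>x. \<phi> x + \<psi> x) \<in> A) \<and>
     (\<forall>\<phi>\<in>A. \<forall>r. (\<lambda>x. sc r (\<phi> x)) \<in> A) \<and> (\<forall>\<psi>\<in>Q. \<forall>\<phi>\<in>A. (\<lambda>x. \<psi> (\<phi> x)) \<in> A)"

lemma left_ideal_Q: "left_ideal Q"
  by (simp add: left_ideal_def Q_zero Q_add Q_scale Q_comp)

lemma left_ideal_annihilator: "left_ideal {\<phi> \<in> Q. \<forall>s\<in>S. \<phi> s = 0}"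
  by (auto simp: left_ideal_def Q_zero Q_add Q_scale Q_comp lin_zero Q_lin)

lemma left_ideal_diff:
  assumes A: "left_ideal A" and \<phi>: "\<phi> \<in> A" and \<psi>: "\<psi> \<in> A"
  shows "(\<lambda>x. \<phi> x - \<psi> x) \<in> A"
proof -
  have add: "\<forall>\<phi>\<in>A. \<forall>\<psi>\<in>A. (\<lambda>x. \<phi> x + \<psi> x) \<in> A"
    and scale: "\<forall>\<phi>\<in>A. \<forall>r. (\<lambda>x. sc r (\<phi> x)) \<in> A"
    using A by (simp_all add: left_ideal_def)
  have "(\<lambda>x. sc (-1) (\<psi> x)) \<in> A" using spec[OF bspec[OF scale \<psi>], of "-1"] .
  from bspec[OF bspec[OF add \<phi>] this] show ?thesis by (simp add: V.scale_minus_left)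
qed

lemma cyclic_submodule:
  assumes A: "left_ideal A"
  shows "{\<phi> u | \<phi>. \<phi> \<in> A} = {0} \<or> {\<phi> u | \<phi>. \<phi> \<in> A} = UNIV"
proof (rule invariant_subspace)
  show "V.subspace {\<phi> u | \<phi>. \<phi> \<in> A}"
    unfolding V.subspace_def
  proof (intro conjI allI ballI)
    show "0 \<in> {\<phi> u | \<phi>. \<phi> \<in> A}" using A by (auto simp: left_ideal_def)
  next
    fix x y assume "x \<in> {\<phi> u | \<phi>. \<phi> \<in> A}" "y \<in> {\<phi> u | \<phi>. \<phi> \<in> A}"
    then obtain \<phi> \<psi> where "\<phi> \<in> A" "\<psi> \<in> A" "x = \<phi> u" "y = \<psi> u" by blast
    then show "x + y \<in> {\<phi> u | \<phi>. \<phi> \<in> A}"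
      using A by (intro CollectI exI[of _ "\<lambda>x. \<phi> x + \<psi> x"]) (simp add: left_ideal_def)
  next
    fix c x assume "x \<in> {\<phi> u | \<phi>. \<phi> \<in> A}"
    then obtain \<phi> where "\<phi> \<in> A" "x = \<phi> u" by blast
    then show "sc c x \<in> {\<phi> u | \<phi>. \<phi> \<in> A}"
      using A by (intro CollectI exI[of _ "\<lambda>x. sc c (\<phi> x)"]) (simp add: left_ideal_def)
  qed
next
  fix \<psi> w assume "\<psi> \<in> Q" "w \<in> {\<phi> u | \<phi>. \<phi> \<in> A}"
  then obtain \<phi> where "\<phi> \<in> A" "w = \<phi> u" by blast
  then show "\<psi> w \<in> {\<phi> u | \<phi>. \<phi> \<in> A}"
    using A \<open>\<psi> \<in> Q\<close> by (intro CollectI exI[of _ "\<lambda>x. \<psi> (\<phi> x)"]) (simp add: left_ideal_def)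
qed

(* g is a simple Q-module: every nonzero vector generates it.  (If Qv = 0, the common
   kernel of Q would be a nonzero invariant subspace, hence g, contradicting [g,g] \<noteq> 0.) *)
lemma orbit: assumes v: "v \<noteq> 0" shows "{\<phi> v | \<phi>. \<phi> \<in> Q} = UNIV"
proof (rule ccontr)
  assume "{\<phi> v | \<phi>. \<phi> \<in> Q} \<noteq> UNIV"
  then have Qv: "{\<phi> v | \<phi>. \<phi> \<in> Q} = {0}" using cyclic_submodule[OF left_ideal_Q] by blast
  let ?K = "{u. \<forall>\<phi>\<in>Q. \<phi> u = 0}"
  have "V.subspace ?K" unfolding V.subspace_def
    using Q_lin by (auto simp: lin_zero lin_add lin_scale)
  moreover have "\<phi> w \<in> ?K" if \<phi>: "\<phi> \<in> Q" and w: "w \<in> ?K" for \<phi> w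
  proof -
    have "\<psi> (\<phi> w) = 0" if "\<psi> \<in> Q" for \<psi>
      using bspec[OF w[simplified] Q_comp[OF that \<phi>]] by simp
    then show ?thesis by simp
  qed
  ultimately have "?K = {0} \<or> ?K = UNIV" by (rule invariant_subspace)
  moreover have "v \<in> ?K" using Qv by blast
  ultimately have "?K = UNIV" using v by blast
  moreover obtain x y where "br x y \<noteq> 0" using nontriv by blast
  ultimately show False using Q_br[of x] by blast
qed

(* Schur's lemma: a linear map commuting with Q is a scalar, since its eigenspaces are
   Q-invariant and eigenvectors exist over an algebraically closed field. *)
lemma schur:
  assumes th: "lin \<theta>" and comm: "\<And>\<psi> w. \<psi> \<in> Q \<Longrightarrow> \<theta> (\<psi> w) = \<psi> (\<theta> w)"
  obtains l where "\<And>w. \<theta> w = sc l w"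
proof -
  obtain x0 y0 where "br x0 y0 \<noteq> 0" using nontriv by blast
  then obtain l z where z: "z \<noteq> 0" "\<theta> z = sc l z" using eigen_exists[OF th] by blast
  let ?K = "{w. \<theta> w = sc l w}"
  have "V.subspace ?K" unfolding V.subspace_def
    using th by (auto simp: lin_zero lin_add lin_scale V.scale_right_distrib V.scale_left_commute)
  moreover have "\<phi> w \<in> ?K" if "\<phi> \<in> Q" "w \<in> ?K" for \<phi> w
    using that comm Q_lin by (simp add: lin_scale)
  ultimately have "?K = {0} \<or> ?K = UNIV" by (rule invariant_subspace)
  then have "?K = UNIV" using z by auto
  then show ?thesis using that by blast
qed

(* If every \<phi> in the left ideal A that kills u also kills v, then \<phi> u \<mapsto> \<phi> v is a
   well-defined map on the vectors of the form \<phi> u. *)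
definition induced :: "('v \<Rightarrow> 'v) set \<Rightarrow> 'v \<Rightarrow> 'v \<Rightarrow> 'v \<Rightarrow> 'v" where
  "induced A u v w = (SOME \<phi>. \<phi> \<in> A \<and> \<phi> u = w) v"

lemma induced_apply:
  assumes A: "left_ideal A" and ker: "\<forall>\<phi>\<in>A. \<phi> u = 0 \<longrightarrow> \<phi> v = 0" and \<phi>: "\<phi> \<in> A"
  shows "induced A u v (\<phi> u) = \<phi> v"
proof -
  define \<phi>' where "\<phi>' = (SOME \<phi>'. \<phi>' \<in> A \<and> \<phi>' u = \<phi> u)"
  have "\<phi>' \<in> A \<and> \<phi>' u = \<phi> u" unfolding \<phi>'_def by (rule someI[of _ \<phi>]) (use \<phi> in simp)
  then have diff: "(\<lambda>x. \<phi>' x - \<phi> x) \<in> A" and "(\<lambda>x. \<phi>' x - \<phi> x) u = 0"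
    using left_ideal_diff[OF A _ \<phi>] by auto
  then have "(\<lambda>x. \<phi>' x - \<phi> x) v = 0" using bspec[OF ker diff] by blast
  then show ?thesis by (simp add: induced_def \<phi>'_def)
qed

lemma induced_map:
  assumes A: "left_ideal A" and onto: "{\<phi> u | \<phi>. \<phi> \<in> A} = UNIV"
    and ker: "\<forall>\<phi>\<in>A. \<phi> u = 0 \<longrightarrow> \<phi> v = 0"
  shows "lin (induced A u v)" and "\<And>\<chi> w. \<chi> \<in> Q \<Longrightarrow> induced A u v (\<chi> w) = \<chi> (induced A u v w)"
proof -
  let ?\<theta> = "induced A u v"
  note th = induced_apply[OF A ker]
  have ex: "\<exists>\<phi>. \<phi> \<in> A \<and> \<phi> u = w" for w
  proof -
    have "w \<in> {\<phi> u | \<phi>. \<phi> \<in> A}" using onto by simp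
    then show ?thesis by blast
  qed
  show "lin ?\<theta>" unfolding lin_def
  proof (intro conjI allI)
    fix x y
    obtain \<phi> where \<phi>: "\<phi> \<in> A" "\<phi> u = x" using ex by blast
    obtain \<psi> where \<psi>: "\<psi> \<in> A" "\<psi> u = y" using ex by blast
    have "(\<lambda>x. \<phi> x + \<psi> x) \<in> A" using A \<phi> \<psi> by (simp add: left_ideal_def)
    from th[OF this] have "?\<theta> (\<phi> u + \<psi> u) = \<phi> v + \<psi> v" by simp
    then show "?\<theta> (x + y) = ?\<theta> x + ?\<theta> y" using th[OF \<phi>(1)] th[OF \<psi>(1)] \<phi> \<psi> by simp
  next
    fix a x
    obtain \<phi> where \<phi>: "\<phi> \<in> A" "\<phi> u = x" using ex by blast
    have "(\<lambda>x. sc a (\<phi> x)) \<in> A" using A \<phi> by (simp add: left_ideal_def)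
    from th[OF this] have "?\<theta> (sc a (\<phi> u)) = sc a (\<phi> v)" by simp
    then show "?\<theta> (sc a x) = sc a (?\<theta> x)" using th[OF \<phi>(1)] \<phi> by simp
  qed
  fix \<chi> w assume \<chi>: "\<chi> \<in> Q"
  obtain \<phi> where \<phi>: "\<phi> \<in> A" "\<phi> u = w" using ex by blast
  have "(\<lambda>x. \<chi> (\<phi> x)) \<in> A" using A \<phi> \<chi> by (simp add: left_ideal_def)
  from th[OF this] have "?\<theta> (\<chi> (\<phi> u)) = \<chi> (\<phi> v)" by simp
  then show "?\<theta> (\<chi> w) = \<chi> (?\<theta> w)" using th[OF \<phi>(1)] \<phi> by simp
qed

lemma density:
  "finite S \<Longrightarrow> v \<notin> V.span S \<Longrightarrow> \<exists>\<phi>\<in>Q. (\<forall>s\<in>S. \<phi> s = 0) \<and> \<phi> v \<noteq> 0"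
proof (induction S arbitrary: v rule: finite_induct)
  case empty
  then have "v \<noteq> 0" by simp
  then have "v \<in> {\<phi> v | \<phi>. \<phi> \<in> Q}" using orbit by blast
  then obtain \<phi> where "\<phi> \<in> Q" "\<phi> v = v" by auto
  then show ?case using \<open>v \<noteq> 0\<close> by (intro bexI[of _ \<phi>]) auto
next
  case (insert u S)
  define Ann where "Ann = {\<phi> \<in> Q. \<forall>s\<in>S. \<phi> s = 0}"
  have Ann: "left_ideal Ann" unfolding Ann_def by (rule left_ideal_annihilator)
  have IH: "\<exists>\<phi>\<in>Ann. \<phi> w \<noteq> 0" if "w \<notin> V.span S" for w
    using insert.IH[OF that] by (auto simp: Ann_def)
  consider "{\<phi> u | \<phi>. \<phi> \<in> Ann} = {0}" | "{\<phi> u | \<phi>. \<phi> \<in> Ann} = UNIV"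
    using cyclic_submodule[OF Ann] by blast
  then show ?case
  proof cases
    case 1
    then have "u \<in> V.span S" using IH by blast
    then have "v \<notin> V.span S" using insert.prems by (simp add: V.span_redundant)
    then obtain \<phi> where "\<phi> \<in> Ann" "\<phi> v \<noteq> 0" using IH by blast
    moreover have "\<phi> u = 0" using 1 \<open>\<phi> \<in> Ann\<close> by blast
    ultimately show ?thesis by (auto simp: Ann_def)
  next
    case 2
    show ?thesis
    proof (rule ccontr)
      assume "\<not> ?thesis"
      then have ker: "\<forall>\<phi>\<in>Ann. \<phi> u = 0 \<longrightarrow> \<phi> v = 0" by (auto simp: Ann_def)
      obtain l where l: "\<And>w. induced Ann u v w = sc l w"
        using schur[OF induced_map[of Ann u v, OF Ann 2 ker]] by blast
      have "\<phi> (v - sc l u) = 0" if "\<phi> \<in> Ann" for \<phi>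
        using induced_apply[OF Ann ker that] l that Q_lin[of \<phi>] by (simp add: Ann_def lin_diff lin_scale)
      then have "v - sc l u \<in> V.span S" using IH by blast
      then show False using insert.prems by (simp add: V.span_breakdown_eq)
    qed
  qed
qed

lemma basis_separator:
  assumes b: "b \<in> Bs" shows "\<exists>\<phi>\<in>Q. (\<forall>s\<in>Bs - {b}. \<phi> s = 0) \<and> \<phi> b \<noteq> 0"
proof -
  have "b \<notin> V.span (Bs - {b})" using V.independent_Basis b by (auto simp: V.dependent_def)
  then show ?thesis using density[of "Bs - {b}" b] V.finite_Basis by auto
qed

(* With separators \<phi>_b and elements
   \<psi>_b \<in> Q mapping \<phi>_b b to L b (orbit), \<Sum>_b \<psi>_b \<circ> \<phi>_b \<in> Q agrees with L on the basis. *)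
theorem burnside: assumes L: "lin L" shows "L \<in> Q"
proof -
  obtain \<phi> where \<phi>: "\<And>b. b \<in> Bs \<Longrightarrow> \<phi> b \<in> Q \<and> (\<forall>s\<in>Bs - {b}. \<phi> b s = 0) \<and> \<phi> b b \<noteq> 0"
    using basis_separator by metis
  have "\<forall>b\<in>Bs. \<exists>\<psi>\<in>Q. \<psi> (\<phi> b b) = L b"
  proof
    fix b assume "b \<in> Bs"
    then have "L b \<in> {\<psi> (\<phi> b b) | \<psi>. \<psi> \<in> Q}" using orbit \<phi> by blast
    then show "\<exists>\<psi>\<in>Q. \<psi> (\<phi> b b) = L b" by auto
  qed
  then obtain \<psi> where \<psi>: "\<And>b. b \<in> Bs \<Longrightarrow> \<psi> b \<in> Q \<and> \<psi> b (\<phi> b b) = L b" by metis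
  define F where "F x = (\<Sum>b\<in>Bs. \<psi> b (\<phi> b x))" for x
  have FQ: "F \<in> Q" unfolding F_def[abs_def]
    by (rule Q_sum[OF V.finite_Basis]) (use \<phi> \<psi> Q_comp in auto)
  have "F b' = L b'" if b': "b' \<in> Bs" for b'
  proof -
    have "F b' = (\<Sum>b\<in>Bs. if b = b' then L b' else 0)"
      unfolding F_def
      using \<phi> \<psi> b' Q_lin by (intro sum.cong refl) (auto simp: lin_zero)
    also have "\<dots> = L b'" using b' V.finite_Basis by (subst sum.delta) auto
    finally show ?thesis .
  qed
  then have "F = L" using lin_eq_on_basis[OF Q_lin[OF FQ] L] by blast
  then show ?thesis using FQ by simp
qed

end

end

section \<open>The grading of g by commuting automorphisms\<close>

locale multiloop_grading = lie_space sc br Bs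
  for sc :: "'f::field_char_0 \<Rightarrow> 'v::ab_group_add \<Rightarrow> 'v" and br Bs +
  fixes N :: nat and m :: "nat \<Rightarrow> nat"
    and \<sigma> :: "nat \<Rightarrow> 'v \<Rightarrow> 'v" and \<xi> :: "nat \<Rightarrow> 'f"
  assumes aut: "\<And>i. i < N \<Longrightarrow> lie_automorphism sc br (\<sigma> i)"
    and comm: "\<And>i j. i < N \<Longrightarrow> j < N \<Longrightarrow> \<sigma> i \<circ> \<sigma> j = \<sigma> j \<circ> \<sigma> i"
    and ord: "\<And>i. i < N \<Longrightarrow> has_order (\<sigma> i) (m i)"
    and prim: "\<And>i. i < N \<Longrightarrow> primitive_root (\<xi> i) (m i)"
begin

lemma m_pos: "i < N \<Longrightarrow> m i > 0" using ord by (simp add: has_order_def)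
lemma sigma_order: "i < N \<Longrightarrow> (\<sigma> i ^^ m i) = id" using ord by (simp add: has_order_def)
lemma lin_sigma: "i < N \<Longrightarrow> lin (\<sigma> i)" using aut by (simp add: lin_def lie_automorphism_def)
lemma sigma_bracket: "i < N \<Longrightarrow> \<sigma> i (br x y) = br (\<sigma> i x) (\<sigma> i y)"
  using aut by (simp add: lie_automorphism_def)
lemma xi_order: "i < N \<Longrightarrow> \<xi> i ^ m i = 1" using prim by (simp add: primitive_root_def)
lemma xi_nonzero: "i < N \<Longrightarrow> \<xi> i \<noteq> 0" using xi_order m_pos by (metis power_0_left less_not_refl2 zero_neq_one)

lemma xi_powi_mod: assumes "i < N" shows "\<xi> i powi r = \<xi> i powi (r mod int (m i))"
proof -
  have "r = r mod int (m i) + int (m i) * (r div int (m i))" by simp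
  then have "\<xi> i powi r = \<xi> i powi (r mod int (m i)) * \<xi> i powi (int (m i) * (r div int (m i)))"
    by (metis power_int_add xi_nonzero[OF assms])
  also have "\<xi> i powi (int (m i) * (r div int (m i))) = (\<xi> i powi int (m i)) powi (r div int (m i))"
    by (simp add: power_int_mult)
  also have "\<xi> i powi int (m i) = 1" using xi_order[OF assms] by simp
  finally show ?thesis by simp
qed

lemma xi_powi_one: assumes "i < N" shows "\<xi> i powi r = 1 \<longleftrightarrow> int (m i) dvd r"
proof -
  have mp: "int (m i) > 0" using m_pos[OF assms] by simp
  have "\<xi> i powi r = \<xi> i ^ nat (r mod int (m i))"
    using xi_powi_mod[OF assms, of r] mp by (simp add: power_int_def)
  moreover have "nat (r mod int (m i)) < m i" using mp by (simp add: nat_less_iff)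
  ultimately have "\<xi> i powi r = 1 \<longleftrightarrow> nat (r mod int (m i)) = 0"
    using prim[OF assms] unfolding primitive_root_def by (metis gr0I power_0)
  also have "\<dots> \<longleftrightarrow> r mod int (m i) = 0" using mp pos_mod_sign[of "int (m i)" r] by linarith
  finally show ?thesis by (simp add: dvd_eq_mod_eq_0)
qed

lemma powi_pow: "(x::'f) powi (r * int j) = (x powi r) ^ j"
  by (simp add: power_int_mult)

lemma geometric_sum_root: assumes "i < N"
  shows "(\<Sum>j<m i. (\<xi> i powi r) ^ j) = (if int (m i) dvd r then of_nat (m i) else 0)"
proof (cases "int (m i) dvd r")
  case True
  then have "\<xi> i powi r = 1" using xi_powi_one[OF assms] by simp
  then show ?thesis using True by simp
next
  case False
  then have ne: "\<xi> i powi r \<noteq> 1" using xi_powi_one[OF assms] by simp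
  have "(\<xi> i powi r) ^ m i = \<xi> i powi (r * int (m i))" by (simp add: powi_pow)
  also have "\<dots> = 1" using xi_powi_one[OF assms] by simp
  finally show ?thesis using ne False by (simp add: sum_gp_strict)
qed

lemma sigma_pow_commute: assumes "i < N" "i' < N"
  shows "\<sigma> i' ((\<sigma> i ^^ j) x) = (\<sigma> i ^^ j) (\<sigma> i' x)"
proof (induction j)
  case (Suc j)
  have "\<sigma> i' (\<sigma> i y) = \<sigma> i (\<sigma> i' y)" for y
    using comm[OF assms] by (metis comp_apply)
  then show ?case using Suc by simp
qed simp

(* The averaging operator (1/m_i) \<Sum>_j \<xi>_i^{-sj} \<sigma>_i^j: the projection of g onto the
   \<xi>_i^s-eigenspace of \<sigma>_i along the other eigenspaces. *)
definition eig_proj :: "nat \<Rightarrow> int \<Rightarrow> 'v \<Rightarrow> 'v" where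
  "eig_proj i s x = sc (inverse (of_nat (m i))) (\<Sum>j<m i. sc (\<xi> i powi (- (s * int j))) ((\<sigma> i ^^ j) x))"

lemma lin_eig_proj: "i < N \<Longrightarrow> lin (eig_proj i s)"
  unfolding eig_proj_def[abs_def]
  by (intro lin_scf lin_sumf lin_pow lin_sigma) simp

lemma eig_proj_commute: assumes "i < N" "i' < N" shows "\<sigma> i' (eig_proj i s x) = eig_proj i s (\<sigma> i' x)"
  unfolding eig_proj_def using lin_sigma[OF assms(2)]
  by (simp add: lin_scale lin_sum sigma_pow_commute[OF assms])

(* Its image lies in the \<xi>_i^s-eigenspace: applying \<sigma>_i shifts the summation index,
   and the sum is periodic because \<sigma>_i^{m_i} = id and \<xi>_i^{m_i} = 1. *)
lemma eig_proj_eigen: assumes i: "i < N" shows "\<sigma> i (eig_proj i s x) = sc (\<xi> i powi s) (eig_proj i s x)"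
proof -
  define h where "h j = sc (\<xi> i powi (- (s * int j))) ((\<sigma> i ^^ j) x)" for j
  have nz: "\<xi> i \<noteq> 0" using xi_nonzero[OF i] .
  have 1: "\<sigma> i (h j) = sc (\<xi> i powi s) (h (Suc j))" for j
  proof -
    have "\<xi> i powi (- (s * int j)) = \<xi> i powi s * \<xi> i powi (- (s * int (Suc j)))"
      by (subst power_int_add[symmetric]) (auto simp: nz algebra_simps)
    then show ?thesis using lin_sigma[OF i]
      by (simp add: h_def lin_scale V.scale_scale)
  qed
  have hm: "h (m i) = h 0"
  proof -
    have "\<xi> i powi (- (s * int (m i))) = 1" using xi_powi_one[OF i] by simp
    then show ?thesis using sigma_order[OF i] by (simp add: h_def)
  qed
  have sh: "(\<Sum>j<m i. h (Suc j)) = (\<Sum>j<m i. h j)"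
  proof -
    have "h 0 + (\<Sum>j<m i. h (Suc j)) = (\<Sum>j<m i. h j) + h (m i)"
      by (metis sum.lessThan_Suc sum.lessThan_Suc_shift)
    then show ?thesis using hm by (simp add: add.commute)
  qed
  have "\<sigma> i (eig_proj i s x) = sc (inverse (of_nat (m i))) (\<Sum>j<m i. \<sigma> i (h j))"
    using lin_sigma[OF i] by (simp add: eig_proj_def h_def[symmetric] lin_scale lin_sum)
  also have "\<dots> = sc (inverse (of_nat (m i))) (sc (\<xi> i powi s) (\<Sum>j<m i. h (Suc j)))"
    by (simp add: 1 V.scale_sum_right)
  also have "\<dots> = sc (\<xi> i powi s) (eig_proj i s x)"
    by (simp add: sh eig_proj_def h_def[symmetric] V.scale_left_commute)
  finally show ?thesis .
qed

lemma sigma_pow_eigen: assumes i: "i < N" and x: "\<sigma> i x = sc (\<xi> i powi t) x"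
  shows "(\<sigma> i ^^ j) x = sc (\<xi> i powi (t * int j)) x"
proof (induction j)
  case (Suc j)
  have "\<xi> i powi (t * int (Suc j)) = \<xi> i powi (t * int j) * \<xi> i powi t"
    by (simp only: powi_pow power_Suc2)
  then show ?case using Suc lin_sigma[OF i] x
    by (simp add: lin_scale V.scale_scale mult.commute)
qed simp

lemma eig_proj_on_eigen: assumes i: "i < N" and x: "\<sigma> i x = sc (\<xi> i powi t) x"
  shows "eig_proj i s x = (if int (m i) dvd (t - s) then x else 0)"
proof -
  have nz: "\<xi> i \<noteq> 0" using xi_nonzero[OF i] .
  have t: "sc (\<xi> i powi (- (s * int j))) ((\<sigma> i ^^ j) x) = sc ((\<xi> i powi (t - s)) ^ j) x" for j
  proof -
    have "\<xi> i powi (- (s * int j)) * \<xi> i powi (t * int j) = \<xi> i powi ((t - s) * int j)"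
      by (subst power_int_add[symmetric]) (auto simp: nz algebra_simps)
    then show ?thesis by (simp add: sigma_pow_eigen[OF i x] V.scale_scale powi_pow)
  qed
  have "eig_proj i s x = sc (inverse (of_nat (m i))) (sc (\<Sum>j<m i. (\<xi> i powi (t - s)) ^ j) x)"
    by (simp add: eig_proj_def t V.scale_sum_left)
  also have "\<dots> = (if int (m i) dvd (t - s) then x else 0)"
    using m_pos[OF i] by (simp add: geometric_sum_root[OF i] V.scale_scale)
  finally show ?thesis .
qed

(* The projections for s = 0, ..., m_i - 1 sum to the identity (orthogonality of characters). *)
lemma eig_proj_sum: assumes i: "i < N" shows "(\<Sum>s\<in>{0..<int (m i)}. eig_proj i s x) = x"
proof -
  have nz: "\<xi> i \<noteq> 0" using xi_nonzero[OF i] .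
  have ims: "{0..<int (m i)} = int ` {..<m i}"
    by (auto simp: image_iff) (metis atLeastLessThan_iff lessThan_iff nonneg_int_cases of_nat_less_iff)
  have inner: "(\<Sum>s<m i. \<xi> i powi (- (int s * int j))) = (if j = 0 then of_nat (m i) else 0)"
    if j: "j < m i" for j
  proof -
    have "(\<Sum>s<m i. \<xi> i powi (- (int s * int j))) = (\<Sum>s<m i. (\<xi> i powi (- int j)) ^ s)"
      by (intro sum.cong refl) (metis mult.commute mult_minus_left powi_pow)
    also have "\<dots> = (if int (m i) dvd (- int j) then of_nat (m i) else 0)" by (rule geometric_sum_root[OF i])
    also have "(int (m i) dvd (- int j)) \<longleftrightarrow> j = 0"
      using j by (auto simp: of_nat_dvd_iff dvd_minus_iff dest: nat_dvd_not_less)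
    finally show ?thesis .
  qed
  have "(\<Sum>s\<in>{0..<int (m i)}. eig_proj i s x) = (\<Sum>s<m i. eig_proj i (int s) x)"
    by (simp add: ims sum.reindex)
  also have "\<dots> = sc (inverse (of_nat (m i)))
      (\<Sum>j<m i. \<Sum>s<m i. sc (\<xi> i powi (- (int s * int j))) ((\<sigma> i ^^ j) x))"
    unfolding eig_proj_def V.scale_sum_right[symmetric] by (subst sum.swap) (rule refl)
  also have "\<dots> = sc (inverse (of_nat (m i))) (\<Sum>j<m i. sc (if j = 0 then of_nat (m i) else 0) ((\<sigma> i ^^ j) x))"
    by (simp add: V.scale_sum_left[symmetric] inner)
  also have "\<dots> = x"
    using m_pos[OF i] by (simp add: if_distrib[of "\<lambda>c. sc c _"] V.scale_scale sum.delta' cong: if_cong)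
  finally show ?thesis .
qed

abbreviation gc :: "(nat \<Rightarrow> int) \<Rightarrow> 'v set" where "gc c \<equiv> g_cls sc N \<sigma> \<xi> c"

lemma gc_iff: "x \<in> gc c \<longleftrightarrow> (\<forall>i<N. \<sigma> i x = sc (\<xi> i powi c i) x)"
  by (simp add: g_cls_def)

lemma gc_zero: "0 \<in> gc c" by (simp add: gc_iff lin_zero lin_sigma)

lemma bracket_degree: assumes "x \<in> gc c" "y \<in> gc d" shows "br x y \<in> gc (\<lambda>i. c i + d i)"
  unfolding gc_iff
proof (intro allI impI)
  fix i assume i: "i < N"
  have "\<xi> i powi (c i + d i) = \<xi> i powi c i * \<xi> i powi d i"
    using xi_nonzero[OF i] by (simp add: power_int_add)
  then show "\<sigma> i (br x y) = sc (\<xi> i powi (c i + d i)) (br x y)"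
    using assms i by (simp add: gc_iff sigma_bracket br_props V.scale_scale mult.commute)
qed

lemma cls_apply: "cls N m k i = (if i < N then k i mod int (m i) else 0)"
  by (simp add: cls_def)

lemma cls_eq_iff: "cls N m k = cls N m k' \<longleftrightarrow> (\<forall>i<N. k i mod int (m i) = k' i mod int (m i))"
proof
  assume h: "cls N m k = cls N m k'"
  show "\<forall>i<N. k i mod int (m i) = k' i mod int (m i)"
  proof (intro allI impI)
    fix i assume "i < N"
    then show "k i mod int (m i) = k' i mod int (m i)" using fun_cong[OF h, of i] by (simp add: cls_def)
  qed
next
  assume "\<forall>i<N. k i mod int (m i) = k' i mod int (m i)"
  then show "cls N m k = cls N m k'" by (simp add: cls_def fun_eq_iff)
qed

lemma cls_cls[simp]: "cls N m (cls N m k) = cls N m k"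
  by (simp add: cls_def fun_eq_iff)

lemma gc_cls: "gc (cls N m c) = gc c"
proof -
  have *: "\<xi> i powi (cls N m c i) = \<xi> i powi c i" if "i < N" for i
    using xi_powi_mod[OF that, of "c i"] that by (simp add: cls_def)
  show ?thesis unfolding g_cls_def
  proof (intro Collect_cong iffI allI impI)
    fix x i assume "\<forall>i<N. \<sigma> i x = sc (\<xi> i powi cls N m c i) x" "i < N"
    then show "\<sigma> i x = sc (\<xi> i powi c i) x" using * by simp
  next
    fix x i assume "\<forall>i<N. \<sigma> i x = sc (\<xi> i powi c i) x" "i < N"
    then show "\<sigma> i x = sc (\<xi> i powi cls N m c i) x" using * by simp
  qed
qed

(* The canonical representatives of G = Z/m_1 \<times> ... \<times> Z/m_N; classes_upto n only
   varies the first n coordinates and is used for induction on the number of \<sigma>_i. *)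
definition classes_upto :: "nat \<Rightarrow> (nat \<Rightarrow> int) set" where
  "classes_upto n = {c. (\<forall>i<n. 0 \<le> c i \<and> c i < int (m i)) \<and> (\<forall>i. n \<le> i \<longrightarrow> c i = 0)}"

abbreviation "classes \<equiv> classes_upto N"

lemma classes_iff: "c \<in> classes \<longleftrightarrow> cls N m c = c"
proof
  assume "c \<in> classes" then show "cls N m c = c"
    by (auto simp: classes_upto_def cls_def fun_eq_iff)
next
  assume h: "cls N m c = c"
  show "c \<in> classes" unfolding classes_upto_def
  proof (safe)
    fix i assume i: "i < N"
    have "c i = c i mod int (m i)" using h by (metis cls_apply i)
    then show "0 \<le> c i" "c i < int (m i)" using m_pos[OF i]
      by (metis of_nat_0_less_iff pos_mod_sign pos_mod_bound)+
  next
    fix i assume "N \<le> i" then show "c i = 0" using h by (metis cls_apply not_le)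
  qed
qed

lemma cls_in_classes: "cls N m k \<in> classes" by (simp add: classes_iff)

lemma classes_upto_Suc: "classes_upto (Suc n) = (\<lambda>(c, s). c(n := s)) ` (classes_upto n \<times> {0..<int (m n)})"
proof (intro set_eqI iffI)
  fix c assume c: "c \<in> classes_upto (Suc n)"
  then have "c(n := 0) \<in> classes_upto n" "c n \<in> {0..<int (m n)}" by (auto simp: classes_upto_def)
  then show "c \<in> (\<lambda>(c, s). c(n := s)) ` (classes_upto n \<times> {0..<int (m n)})"
    by (intro image_eqI[where x="(c(n:=0), c n)"]) auto
qed (auto simp: classes_upto_def)

lemma classes_upto_inj: "inj_on (\<lambda>(c, s). c(n := s)) (classes_upto n \<times> {0..<int (m n)})"
proof (rule inj_onI, clarify)
  fix c s c' s' assume c: "c \<in> classes_upto n" and c': "c' \<in> classes_upto n" and h: "c(n := s) = c'(n := s')"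
  have "s = s'" using fun_cong[OF h, of n] by simp
  moreover have "c i = c' i" for i
  proof (cases "i = n")
    case True then show ?thesis using c c' by (simp add: classes_upto_def)
  next
    case False then show ?thesis using fun_cong[OF h, of i] by simp
  qed
  ultimately show "c = c' \<and> s = s'" by auto
qed

lemma finite_classes_upto: "finite (classes_upto n)"
proof (induction n)
  case 0
  have "classes_upto 0 = {\<lambda>_. 0}" by (auto simp: classes_upto_def)
  then show ?case by simp
next
  case (Suc n) then show ?case by (simp add: classes_upto_Suc)
qed

(* proj_upto n c = eig_proj (n-1) c_{n-1} \<circ> ... \<circ> eig_proj 0 c_0; for n = N this is the projection
   gproj c of g onto g_c along the other graded pieces. *)
primrec proj_upto :: "nat \<Rightarrow> (nat \<Rightarrow> int) \<Rightarrow> 'v \<Rightarrow> 'v" where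
  "proj_upto 0 c x = x"
| "proj_upto (Suc n) c x = eig_proj n (c n) (proj_upto n c x)"

abbreviation gproj :: "(nat \<Rightarrow> int) \<Rightarrow> 'v \<Rightarrow> 'v" where "gproj c \<equiv> proj_upto N c"

lemma lin_proj_upto: "n \<le> N \<Longrightarrow> lin (proj_upto n c)"
proof (induction n)
  case 0 then show ?case by (simp add: lin_def)
next
  case (Suc n)
  have "proj_upto (Suc n) c = eig_proj n (c n) \<circ> proj_upto n c" by (simp add: fun_eq_iff)
  then show ?case using Suc lin_eig_proj[of n "c n"] lin_comp[of "eig_proj n (c n)" "proj_upto n c"] by (simp add: comp_def)
qed

lemma lin_gproj: "lin (gproj c)" by (simp add: lin_proj_upto)

lemma proj_upto_cong: "(\<And>i. i < n \<Longrightarrow> c i = c' i) \<Longrightarrow> proj_upto n c x = proj_upto n c' x"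
  by (induction n) auto

lemma proj_upto_eigen: "n \<le> N \<Longrightarrow> i < n \<Longrightarrow> \<sigma> i (proj_upto n c x) = sc (\<xi> i powi c i) (proj_upto n c x)"
proof (induction n)
  case (Suc n)
  show ?case
  proof (cases "i < n")
    case True
    then show ?thesis using Suc eig_proj_commute[of n i] lin_eig_proj[of n]
      by (simp add: lin_scale)
  next
    case False
    then have "i = n" using Suc by simp
    then show ?thesis using Suc eig_proj_eigen by simp
  qed
qed simp

lemma gproj_in: "gproj c x \<in> gc c" by (simp add: gc_iff proj_upto_eigen)

lemma proj_upto_on: assumes x: "x \<in> gc c'"
  shows "n \<le> N \<Longrightarrow> proj_upto n c x = (if \<forall>i<n. int (m i) dvd (c' i - c i) then x else 0)"
proof (induction n)
  case (Suc n)
  then have n: "n < N" by simp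
  have sx: "\<sigma> n x = sc (\<xi> n powi c' n) x" using x n by (simp add: gc_iff)
  have "(\<forall>i<Suc n. int (m i) dvd (c' i - c i)) \<longleftrightarrow>
        (\<forall>i<n. int (m i) dvd (c' i - c i)) \<and> int (m n) dvd (c' n - c n)"
    by (auto simp: less_Suc_eq)
  then show ?case using Suc eig_proj_on_eigen[OF n sx, of "c n"] lin_zero[OF lin_eig_proj[OF n]] by auto
qed simp

lemma gproj_on: assumes x: "x \<in> gc c'" and c: "c \<in> classes"
  shows "gproj c x = (if cls N m c' = c then x else 0)"
proof -
  have "(\<forall>i<N. int (m i) dvd (c' i - c i)) \<longleftrightarrow> cls N m c' = cls N m c"
    unfolding cls_eq_iff by (simp add: mod_eq_dvd_iff)
  then show ?thesis using proj_upto_on[OF x order_refl] c classes_iff by auto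
qed

lemma gproj_id: "x \<in> gc c \<Longrightarrow> gproj (cls N m c) x = x"
  using gproj_on cls_in_classes by simp

lemma proj_upto_upd[simp]: "proj_upto n (c(n := s)) x = proj_upto n c x"
  by (rule proj_upto_cong) simp

lemma proj_upto_sum: "n \<le> N \<Longrightarrow> (\<Sum>c\<in>classes_upto n. proj_upto n c x) = x"
proof (induction n)
  case 0
  have "classes_upto 0 = {\<lambda>_. 0}" by (auto simp: classes_upto_def)
  then show ?case by simp
next
  case (Suc n)
  then have n: "n < N" by simp
  have "(\<Sum>c\<in>classes_upto (Suc n). proj_upto (Suc n) c x) =
        (\<Sum>cs\<in>classes_upto n \<times> {0..<int (m n)}. proj_upto (Suc n) ((fst cs)(n := snd cs)) x)"
    unfolding classes_upto_Suc by (subst sum.reindex[OF classes_upto_inj]) (simp add: case_prod_beta)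
  also have "\<dots> = (\<Sum>cs\<in>classes_upto n \<times> {0..<int (m n)}. eig_proj n (snd cs) (proj_upto n (fst cs) x))"
    by simp
  also have "\<dots> = (\<Sum>c\<in>classes_upto n. \<Sum>s\<in>{0..<int (m n)}. eig_proj n s (proj_upto n c x))"
    by (simp add: sum.cartesian_product case_prod_beta)
  also have "\<dots> = (\<Sum>c\<in>classes_upto n. proj_upto n c x)" by (simp add: eig_proj_sum[OF n])
  finally show ?case using Suc by simp
qed

lemma gproj_sum: "(\<Sum>c\<in>classes. gproj c x) = x" by (simp add: proj_upto_sum)

lemma finite_classes: "finite classes" by (rule finite_classes_upto)

lemma cls_eq_dvd: "cls N m x = cls N m y \<longleftrightarrow> (\<forall>i<N. int (m i) dvd (x i - y i))"
  by (simp add: cls_eq_iff mod_eq_dvd_iff)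

lemma cls_add_cong:
  assumes "cls N m x = cls N m x'" "cls N m y = cls N m y'"
  shows "cls N m (\<lambda>i. x i + y i) = cls N m (\<lambda>i. x' i + y' i)"
  unfolding cls_eq_dvd
proof (intro allI impI)
  fix i assume "i < N"
  then have "int (m i) dvd (x i - x' i) + (y i - y' i)"
    using assms by (simp add: cls_eq_dvd dvd_add)
  then show "int (m i) dvd (x i + y i - (x' i + y' i))" by (simp add: algebra_simps)
qed

lemma cls_diff_cong:
  assumes "cls N m x = cls N m x'" "cls N m y = cls N m y'"
  shows "cls N m (\<lambda>i. x i - y i) = cls N m (\<lambda>i. x' i - y' i)"
  unfolding cls_eq_dvd
proof (intro allI impI)
  fix i assume "i < N"
  then have "int (m i) dvd (x i - x' i) - (y i - y' i)"
    using assms by (simp add: cls_eq_dvd dvd_diff)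
  then show "int (m i) dvd (x i - y i - (x' i - y' i))" by (simp add: algebra_simps)
qed

lemma classes_valid: "c \<in> classes \<Longrightarrow> valid_exp N c" by (simp add: classes_upto_def valid_exp_def)

lemma cls_shift_iff: assumes c: "c \<in> classes"
  shows "cls N m (\<lambda>i. x i - b i) = cls N m (\<lambda>i. c i - b i) \<longleftrightarrow> cls N m x = c"
proof -
  have "cls N m x = c \<longleftrightarrow> cls N m x = cls N m c" using c classes_iff by simp
  then show ?thesis by (simp add: cls_eq_dvd)
qed

end

section \<open>Laurent polynomials and ideals of R\<close>

lemma lmult_nz:
  fixes f g :: "(nat \<Rightarrow> int) \<Rightarrow> 'a::comm_ring_1"
  assumes "lmult f g k \<noteq> 0" shows "\<exists>a. f a \<noteq> 0 \<and> g (\<lambda>i. k i - a i) \<noteq> 0"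
proof (rule ccontr)
  assume "\<not> ?thesis"
  then have "\<forall>a\<in>{a. f a \<noteq> 0}. f a * g (\<lambda>i. k i - a i) = 0" by auto
  then show False using assms by (simp add: lmult_def)
qed

lemma laurent_lmult:
  fixes f g :: "(nat \<Rightarrow> int) \<Rightarrow> 'f::comm_ring_1"
  assumes f: "f \<in> laurent N" and g: "g \<in> laurent N"
  shows "lmult f g \<in> laurent N"
proof -
  let ?Sf = "{a. f a \<noteq> 0}" and ?Sg = "{a. g a \<noteq> 0}"
  have fin: "finite ?Sf" "finite ?Sg" using f g by (auto simp: laurent_def)
  have sub: "{k. lmult f g k \<noteq> 0} \<subseteq> (\<lambda>(a, b). (\<lambda>i. a i + b i)) ` (?Sf \<times> ?Sg)"
  proof
    fix k assume "k \<in> {k. lmult f g k \<noteq> 0}"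
    then obtain a where a: "f a \<noteq> 0" "g (\<lambda>i. k i - a i) \<noteq> 0" using lmult_nz by blast
    have "k = (\<lambda>i. a i + (k i - a i))" by simp
    then show "k \<in> (\<lambda>(a, b). (\<lambda>i. a i + b i)) ` (?Sf \<times> ?Sg)"
      using a by (intro image_eqI[where x="(a, \<lambda>i. k i - a i)"]) auto
  qed
  have val: "valid_exp N k" if nz: "lmult f g k \<noteq> 0" for k
  proof -
    obtain a where a: "f a \<noteq> 0" "g (\<lambda>i. k i - a i) \<noteq> 0" using lmult_nz[OF nz] by blast
    then have "valid_exp N a" "valid_exp N (\<lambda>i. k i - a i)" using f g by (auto simp: laurent_def)
    then show ?thesis by (simp add: valid_exp_def)
  qed
  show ?thesis unfolding laurent_def
    using finite_subset[OF sub] fin val by auto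
qed

lemma laurent_add:
  fixes f g :: "(nat \<Rightarrow> int) \<Rightarrow> 'a::monoid_add"
  assumes f: "f \<in> laurent N" and g: "g \<in> laurent N"
  shows "(\<lambda>k. f k + g k) \<in> laurent N"
proof -
  have "{k. f k + g k \<noteq> 0} \<subseteq> {k. f k \<noteq> 0} \<union> {k. g k \<noteq> 0}" by auto
  then show ?thesis using f g unfolding laurent_def by (auto intro: finite_subset)
qed

lemma laurent_ideal: "ring_ideal N (laurent N :: ((nat \<Rightarrow> int) \<Rightarrow> 'f::comm_ring_1) set)"
  unfolding ring_ideal_def by (auto simp: laurent_lmult laurent_add) (simp add: laurent_def)

lemma gen_ideal_least: "ring_ideal N J \<Longrightarrow> S \<subseteq> J \<Longrightarrow> gen_ideal N S \<subseteq> J"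
  by (auto simp: gen_ideal_def)

lemma gen_ideal_sub: "S \<subseteq> gen_ideal N S"
  by (auto simp: gen_ideal_def)

lemma gen_ideal_ideal:
  assumes S: "S \<subseteq> (laurent N :: ((nat \<Rightarrow> int) \<Rightarrow> 'f::comm_ring_1) set)"
  shows "ring_ideal N (gen_ideal N S)"
proof -
  define F where "F = {J. ring_ideal N J \<and> S \<subseteq> J}"
  have G: "gen_ideal N S = \<Inter>F" by (simp add: gen_ideal_def F_def)
  have "laurent N \<in> F" using laurent_ideal S by (simp add: F_def)
  then have "\<Inter>F \<subseteq> laurent N" by blast
  moreover have "\<And>J. J \<in> F \<Longrightarrow> ring_ideal N J" by (simp add: F_def)
  ultimately show ?thesis unfolding G ring_ideal_def by auto
qed

lemma ring_ideal_sum: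
  assumes J: "ring_ideal N J"
  shows "finite S \<Longrightarrow> (\<And>j. j \<in> S \<Longrightarrow> f j \<in> J) \<Longrightarrow> (\<lambda>k. \<Sum>j\<in>S. f j k) \<in> J"
proof (induction S rule: finite_induct)
  case empty then show ?case using J by (simp add: ring_ideal_def)
next
  case (insert x S)
  then have "(\<lambda>k. f x k + (\<lambda>k. \<Sum>j\<in>S. f j k) k) \<in> J" using J by (simp add: ring_ideal_def)
  then show ?case using insert by simp
qed

definition lmonom :: "(nat \<Rightarrow> int) \<Rightarrow> 'f::zero \<Rightarrow> (nat \<Rightarrow> int) \<Rightarrow> 'f" where
  "lmonom b r = (\<lambda>k. if k = b then r else 0)"

lemma lmult_lmonom: "lmult (lmonom b r) h k = r * h (\<lambda>i. k i - b i)"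
proof (cases "r = 0")
  case True
  then have "{a. lmonom b r a \<noteq> 0} = {}" by (simp add: lmonom_def)
  then show ?thesis using True by (simp add: lmult_def)
next
  case False
  then have "{a. lmonom b r a \<noteq> 0} = {b}" by (auto simp: lmonom_def)
  then show ?thesis by (simp add: lmult_def lmonom_def)
qed

lemma lmonom_laurent: "valid_exp N b \<Longrightarrow> lmonom b r \<in> laurent N"
  by (auto simp: laurent_def lmonom_def intro: finite_subset[of _ "{b}"])

definition shift :: "(nat \<Rightarrow> int) \<Rightarrow> ((nat \<Rightarrow> int) \<Rightarrow> 'a) \<Rightarrow> (nat \<Rightarrow> int) \<Rightarrow> 'a" where
  "shift a f = (\<lambda>k. f (\<lambda>i. k i - a i))"

lemma valid_sub: "valid_exp N a \<Longrightarrow> valid_exp N b \<Longrightarrow> valid_exp N (\<lambda>i. a i - b i)"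
  by (simp add: valid_exp_def)
lemma valid_add: "valid_exp N a \<Longrightarrow> valid_exp N b \<Longrightarrow> valid_exp N (\<lambda>i. a i + b i)"
  by (simp add: valid_exp_def)

(* A sum of pure tensors over a finite set can be re-indexed by {..<n}, which is the
   form used in the definitions of g_tensor and graded_tensor. *)
lemma tensor_sum_reindex:
  assumes "finite S" "\<And>s. s \<in> S \<Longrightarrow> Pr (x s) (f s)"
  obtains n xs fs where "(\<lambda>k. \<Sum>s\<in>S. tns sc (x s) (f s) k) = (\<lambda>k. \<Sum>j<(n::nat). tns sc (xs j) (fs j) k)"
    "\<forall>j<n. Pr (xs j) (fs j)"
proof -
  obtain h where h: "bij_betw h {0..<card S} S" using ex_bij_betw_nat_finite[OF assms(1)] by blast
  have "(\<Sum>s\<in>S. tns sc (x s) (f s) k) = (\<Sum>j<card S. tns sc (x (h j)) (f (h j)) k)" for k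
    using sum.reindex_bij_betw[OF h, of "\<lambda>s. tns sc (x s) (f s) k"] by (simp add: atLeast0LessThan)
  moreover have "\<forall>j<card S. Pr (x (h j)) (f (h j))"
    using bij_betwE[OF h] assms(2) by auto
  ultimately show thesis using that[where n="card S" and xs="\<lambda>j. x (h j)" and fs="\<lambda>j. f (h j)"]
    by simp
qed

lemma g_tensor_sumI:
  assumes "finite S" "\<And>s. s \<in> S \<Longrightarrow> f s \<in> J"
  shows "(\<lambda>k. \<Sum>s\<in>S. tns sc (x s) (f s) k) \<in> g_tensor sc J"
proof (rule tensor_sum_reindex[where Pr="\<lambda>_ f. f \<in> J" and sc=sc and x=x and f=f, OF assms])
  fix n xs fs
  assume "(\<lambda>k. \<Sum>s\<in>S. tns sc (x s) (f s) k) = (\<lambda>k. \<Sum>j<(n::nat). tns sc (xs j) (fs j) k)"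
    and "\<forall>j<n. fs j \<in> J"
  then show ?thesis unfolding g_tensor_def mem_Collect_eq
    by (intro exI[of _ n] exI[of _ xs] exI[of _ fs]) simp
qed

lemma graded_tensor_sumI:
  assumes "finite S"
    and "\<And>s. s \<in> S \<Longrightarrow> \<exists>c. valid_exp N c \<and> x s \<in> g_cls sc N \<sigma> \<xi> c \<and> f s \<in> J \<inter> laurent_cls N m c"
  shows "(\<lambda>k. \<Sum>s\<in>S. tns sc (x s) (f s) k) \<in> graded_tensor sc N m \<sigma> \<xi> J"
proof (rule tensor_sum_reindex[where Pr="\<lambda>x f. \<exists>c. valid_exp N c \<and> x \<in> g_cls sc N \<sigma> \<xi> c \<and>
    f \<in> J \<inter> laurent_cls N m c" and sc=sc and x=x and f=f, OF assms])
  fix n xs fs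
  assume "(\<lambda>k. \<Sum>s\<in>S. tns sc (x s) (f s) k) = (\<lambda>k. \<Sum>j<(n::nat). tns sc (xs j) (fs j) k)"
    and "\<forall>j<n. \<exists>c. valid_exp N c \<and> xs j \<in> g_cls sc N \<sigma> \<xi> c \<and> fs j \<in> J \<inter> laurent_cls N m c"
  then show ?thesis unfolding graded_tensor_def mem_Collect_eq
    by (intro exI[of _ n] exI[of _ xs] exI[of _ fs]) simp
qed

section \<open>Ideals of the multiloop algebra are stable under End(g)\<close>

locale multiloop_with_ideal = simple_lie sc br Bs + multiloop_grading sc br Bs N m \<sigma> \<xi>
  for sc :: "'f::field_char_0 \<Rightarrow> 'v::ab_group_add \<Rightarrow> 'v" and br Bs N m \<sigma> \<xi> +
  fixes B :: "(nat \<Rightarrow> int) \<Rightarrow> 'v set" and I :: "((nat \<Rightarrow> int) \<Rightarrow> 'v) set"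
  assumes basis: "\<And>k. valid_exp N k \<Longrightarrow>
           \<not> module.dependent sc (B (cls N m k)) \<and>
           module.span sc (B (cls N m k)) = g_cls sc N \<sigma> \<xi> (cls N m k)"
    and ideal: "multiloop_ideal sc br N \<sigma> \<xi> I"
begin

abbreviation "L \<equiv> multiloop sc N \<sigma> \<xi>"

lemma B_indep: "c \<in> classes \<Longrightarrow> V.independent (B c)"
  using basis[OF classes_valid, of c] classes_iff by simp
lemma B_span: "c \<in> classes \<Longrightarrow> V.span (B c) = gc c"
  using basis[OF classes_valid, of c] classes_iff by simp
lemma B_finite: "c \<in> classes \<Longrightarrow> finite (B c)"
  using B_indep V.finiteI_independent by blast

lemma I_L: "I \<subseteq> L" using ideal by (simp add: multiloop_ideal_def)
lemma I_zero: "(\<lambda>_. 0) \<in> I" using ideal by (simp add: multiloop_ideal_def)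
lemma I_add: "X \<in> I \<Longrightarrow> Y \<in> I \<Longrightarrow> (\<lambda>k. X k + Y k) \<in> I"
  using ideal by (simp add: multiloop_ideal_def)
lemma I_scale: "X \<in> I \<Longrightarrow> (\<lambda>k. sc a (X k)) \<in> I" using ideal by (simp add: multiloop_ideal_def)
lemma I_br: "X \<in> L \<Longrightarrow> Y \<in> I \<Longrightarrow> gR_bracket br X Y \<in> I"
  using ideal by (simp add: multiloop_ideal_def)
lemma I_sum: "finite S \<Longrightarrow> (\<And>j. j \<in> S \<Longrightarrow> f j \<in> I) \<Longrightarrow> (\<lambda>k. \<Sum>j\<in>S. f j k) \<in> I"
  by (induction S rule: finite_induct) (auto simp: I_zero I_add)

lemma L_gc: "X \<in> L \<Longrightarrow> X k \<in> gc k" by (simp add: multiloop_def)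
lemma L_valid: "X \<in> L \<Longrightarrow> \<not> valid_exp N k \<Longrightarrow> X k = 0"
  by (auto simp: multiloop_def gR_def)
lemma L_fin: "X \<in> L \<Longrightarrow> finite {k. X k \<noteq> 0}"
  by (auto simp: multiloop_def gR_def)

lemma tns_zero: "tns sc w (\<lambda>_. 0) = (\<lambda>_. 0)" by (simp add: tns_def)

(* For \<phi> \<in> End(g) and a \<in> Z^N: multiply by t^a, apply \<phi> to the coefficients and project
   the coefficient of t^k onto g_k, so that the result lies in \<L> again. *)
definition loop_op ::
  "('v \<Rightarrow> 'v) \<Rightarrow> (nat \<Rightarrow> int) \<Rightarrow> ((nat \<Rightarrow> int) \<Rightarrow> 'v) \<Rightarrow> (nat \<Rightarrow> int) \<Rightarrow> 'v" where
  "loop_op \<phi> a Y = (\<lambda>k. gproj (cls N m k) (\<phi> (Y (\<lambda>i. k i - a i))))"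

definition stab :: "('v \<Rightarrow> 'v) set" where
  "stab = {\<phi>. lin \<phi> \<and> (\<forall>a. valid_exp N a \<longrightarrow> (\<forall>Y\<in>I. loop_op \<phi> a Y \<in> I))}"

lemma stab_add: assumes "\<phi> \<in> stab" "\<psi> \<in> stab" shows "(\<lambda>x. \<phi> x + \<psi> x) \<in> stab"
proof -
  have "loop_op (\<lambda>x. \<phi> x + \<psi> x) a Y = (\<lambda>k. loop_op \<phi> a Y k + loop_op \<psi> a Y k)" for a Y
    by (simp add: loop_op_def lin_add[OF lin_gproj])
  then show ?thesis using assms by (simp add: stab_def lin_plus I_add)
qed

lemma stab_scale: assumes "\<phi> \<in> stab" shows "(\<lambda>x. sc r (\<phi> x)) \<in> stab"
proof -
  have "loop_op (\<lambda>x. sc r (\<phi> x)) a Y = (\<lambda>k. sc r (loop_op \<phi> a Y k))" for a Y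
    by (simp add: loop_op_def lin_scale[OF lin_gproj])
  then show ?thesis using assms by (simp add: stab_def lin_scf I_scale)
qed

(* Inserting \<Sum>_e P_e = id between \<phi> and \<psi> splits the operator of \<phi> \<circ> \<psi> into a sum of
   composites of operators of \<phi> and \<psi>. *)
lemma loop_op_comp: assumes \<phi>: "lin \<phi>" and \<psi>: "lin \<psi>"
  shows "loop_op (\<phi> \<circ> \<psi>) a Y = (\<lambda>k. \<Sum>e\<in>classes. loop_op \<phi> (\<lambda>i. a i - e i) (loop_op \<psi> e Y) k)"
proof
  fix k
  define h where "h e = cls N m (\<lambda>i. k i - (a i - e i))" for e
  have inj: "inj_on h classes"
  proof (rule inj_onI)
    fix e e' assume e: "e \<in> classes" and e': "e' \<in> classes" and eq: "h e = h e'"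
    have "cls N m e = cls N m e'"
      using eq unfolding h_def cls_eq_dvd by (simp add: algebra_simps)
    then show "e = e'" using e e' classes_iff by simp
  qed
  have img: "h ` classes = classes"
    by (rule endo_inj_surj[OF finite_classes _ inj]) (auto simp: h_def cls_in_classes)
  define z where "z = \<psi> (Y (\<lambda>i. k i - a i))"
  have "(\<Sum>e\<in>classes. loop_op \<phi> (\<lambda>i. a i - e i) (loop_op \<psi> e Y) k) =
      gproj (cls N m k) (\<phi> (\<Sum>e\<in>classes. gproj (h e) z))"
    by (simp add: loop_op_def h_def z_def lin_sum[OF \<phi>] lin_sum[OF lin_gproj] algebra_simps)
  also have "(\<Sum>e\<in>classes. gproj (h e) z) = (\<Sum>c\<in>classes. gproj c z)"
    using sum.reindex[OF inj, of "\<lambda>c. gproj c z"] img by simp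
  also have "\<dots> = z" by (rule gproj_sum)
  finally show "loop_op (\<phi> \<circ> \<psi>) a Y k = (\<Sum>e\<in>classes. loop_op \<phi> (\<lambda>i. a i - e i) (loop_op \<psi> e Y) k)"
    by (simp add: loop_op_def z_def)
qed

lemma stab_comp: assumes \<phi>: "\<phi> \<in> stab" and \<psi>: "\<psi> \<in> stab" shows "\<phi> \<circ> \<psi> \<in> stab"
  unfolding stab_def
proof (intro CollectI conjI allI impI ballI)
  have l\<phi>: "lin \<phi>" and l\<psi>: "lin \<psi>" using \<phi> \<psi> by (auto simp: stab_def)
  show "lin (\<phi> \<circ> \<psi>)" using lin_comp[OF l\<phi> l\<psi>] .
  fix a Y assume a: "valid_exp N a" and Y: "Y \<in> I"
  show "loop_op (\<phi> \<circ> \<psi>) a Y \<in> I" unfolding loop_op_comp[OF l\<phi> l\<psi>]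
  proof (rule I_sum[OF finite_classes])
    fix e assume e: "e \<in> classes"
    have "loop_op \<psi> e Y \<in> I" using \<psi> classes_valid[OF e] Y by (simp add: stab_def)
    then show "loop_op \<phi> (\<lambda>i. a i - e i) (loop_op \<psi> e Y) \<in> I"
      using \<phi> valid_sub[OF a classes_valid[OF e]] by (simp add: stab_def)
  qed
qed

lemma lmonom_in_L:
  assumes "valid_exp N a" shows "lmonom a (gproj (cls N m a) x) \<in> L"
  unfolding multiloop_def gR_def lmonom_def
proof (intro CollectI conjI allI impI)
  show "finite {k. (if k = a then gproj (cls N m a) x else 0) \<noteq> 0}"
    by (rule finite_subset[of _ "{a}"]) auto
  fix k
  show "(if k = a then gproj (cls N m a) x else 0) \<noteq> 0 \<Longrightarrow> valid_exp N k"
    using assms by (auto split: if_splits)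
  show "(if k = a then gproj (cls N m a) x else 0) \<in> gc k"
    using gproj_in[of "cls N m a" x] gc_cls[of a] by (auto simp: gc_zero)
qed

(* The operator of ad x is bracketing with P_{\<bar>a\<bar>}(x) t^a: only the component of x of
   degree \<bar>a\<bar> survives the projection, by compatibility of bracket and grading. *)
lemma loop_op_bracket: assumes Y: "Y \<in> I"
  shows "loop_op (br x) a Y = gR_bracket br (lmonom a (gproj (cls N m a) x)) Y"
proof
  fix k
  define y where "y = Y (\<lambda>i. k i - a i)"
  have y: "y \<in> gc (\<lambda>i. k i - a i)" using L_gc I_L Y by (auto simp: y_def)
  have each: "gproj (cls N m k) (br (gproj c x) y) = (if c = cls N m a then br (gproj c x) y else 0)"
    if c: "c \<in> classes" for c
  proof -
    have "br (gproj c x) y \<in> gc (\<lambda>i. c i + (k i - a i))" using bracket_degree[OF gproj_in y] .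
    then have "gproj (cls N m k) (br (gproj c x) y) =
        (if cls N m (\<lambda>i. c i + (k i - a i)) = cls N m k then br (gproj c x) y else 0)"
      using gproj_on cls_in_classes by blast
    moreover have "cls N m (\<lambda>i. c i + (k i - a i)) = cls N m k \<longleftrightarrow> cls N m c = cls N m a"
      by (simp add: cls_eq_dvd algebra_simps)
    ultimately show ?thesis using c classes_iff by auto
  qed
  have "loop_op (br x) a Y k = gproj (cls N m k) (br (\<Sum>c\<in>classes. gproj c x) y)"
    by (simp add: loop_op_def y_def gproj_sum)
  also have "\<dots> = (\<Sum>c\<in>classes. gproj (cls N m k) (br (gproj c x) y))"
    by (simp add: lin_sum[OF lin_gproj] br_sum_left)
  also have "\<dots> = (\<Sum>c\<in>classes. if c = cls N m a then br (gproj c x) y else 0)"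
    by (rule sum.cong) (simp_all add: each)
  also have "\<dots> = br (gproj (cls N m a) x) y"
    by (subst sum.delta[OF finite_classes]) (simp add: cls_in_classes)
  also have "\<dots> = gR_bracket br (lmonom a (gproj (cls N m a) x)) Y k"
  proof (cases "gproj (cls N m a) x = 0")
    case True
    then have "{b. lmonom a (gproj (cls N m a) x) b \<noteq> 0} = {}" by (auto simp: lmonom_def)
    then show ?thesis using True by (simp add: gR_bracket_def)
  next
    case False
    then have "{b. lmonom a (gproj (cls N m a) x) b \<noteq> 0} = {a}" by (auto simp: lmonom_def)
    then show ?thesis by (simp add: gR_bracket_def y_def lmonom_def)
  qed
  finally show "loop_op (br x) a Y k = gR_bracket br (lmonom a (gproj (cls N m a) x)) Y k" .
qed

lemma stab_bracket: "br x \<in> stab"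
  unfolding stab_def using lin_br loop_op_bracket lmonom_in_L I_br by auto

lemma ad_algebra_stab: "ad_algebra stab"
  unfolding ad_algebra_def
  using stab_add stab_scale stab_comp stab_bracket by (auto simp: stab_def)

lemma lin_in_stab: "lin \<phi> \<Longrightarrow> \<phi> \<in> stab"
  using burnside[OF ad_algebra_stab] by blast

lemma loop_op_coordinate:
  assumes Y: "Y \<in> L" and c: "c \<in> classes" and d: "d \<in> classes" and w: "w \<in> gc d"
    and ca: "cls N m a = cls N m (\<lambda>i. d i - c i)"
  shows "loop_op (\<lambda>x. sc (V.representation (B c) (gproj c x) v) w) a Y =
    tns sc w (shift a (proj sc N m B c v Y))"
proof
  fix k
  define y where "y = Y (\<lambda>i. k i - a i)"
  have y: "y \<in> gc (\<lambda>i. k i - a i)" using L_gc Y by (auto simp: y_def)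
  show "loop_op (\<lambda>x. sc (V.representation (B c) (gproj c x) v) w) a Y k =
    tns sc w (shift a (proj sc N m B c v Y)) k"
  proof (cases "valid_exp N (\<lambda>i. k i - a i) \<and> cls N m (\<lambda>i. k i - a i) = c")
    case True
    then have Py: "gproj c y = y" using gproj_on[OF y c] by simp
    have "cls N m (\<lambda>i. k i - a i) = cls N m c" using True c classes_iff by simp
    then have "cls N m (\<lambda>i. (k i - a i) + a i) = cls N m (\<lambda>i. c i + (d i - c i))"
      by (rule cls_add_cong[OF _ ca])
    then have "cls N m k = d" using d classes_iff by simp
    then have "gproj (cls N m k) (sc r w) = sc r w" for r
      using gproj_on[OF w d] d classes_iff by (simp add: lin_scale[OF lin_gproj])
    then show ?thesis using True
      by (simp add: loop_op_def tns_def shift_def proj_def y_def[symmetric] Py)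
  next
    case False
    have "gproj c y = 0"
    proof (cases "valid_exp N (\<lambda>i. k i - a i)")
      case True
      then show ?thesis using False gproj_on[OF y c] by simp
    next
      case False
      then have "y = 0" using L_valid Y by (auto simp: y_def)
      then show ?thesis by (simp add: lin_zero[OF lin_gproj])
    qed
    then show ?thesis using False
      by (auto simp: loop_op_def tns_def shift_def proj_def y_def[symmetric]
          V.representation_zero lin_zero[OF lin_gproj])
  qed
qed

lemma generator_action:
  assumes Y: "Y \<in> I" and c: "c \<in> classes" and d: "d \<in> classes" and w: "w \<in> gc d"
    and a: "valid_exp N a" and ca: "cls N m a = cls N m (\<lambda>i. d i - c i)"
  shows "tns sc w (shift a (proj sc N m B c v Y)) \<in> I"
proof -
  define \<phi> where "\<phi> x = sc (V.representation (B c) (gproj c x) v) w" for x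
  have ind: "V.independent (B c)" and sp: "\<And>x. gproj c x \<in> V.span (B c)"
    using B_indep[OF c] B_span[OF c] gproj_in by auto
  have "lin \<phi>" unfolding lin_def \<phi>_def
    by (simp add: lin_add[OF lin_gproj] lin_scale[OF lin_gproj] V.representation_add[OF ind sp sp]
        V.representation_scale[OF ind sp] V.scale_left_distrib V.scale_scale)
  then have "loop_op \<phi> a Y \<in> I" using lin_in_stab a Y by (simp add: stab_def)
  then show ?thesis
    using loop_op_coordinate[OF subsetD[OF I_L Y] c d w ca] by (simp add: \<phi>_def[abs_def])
qed

end

section \<open>The associated ideal I(\<I>) of R is graded and acts on \<I>\<close>

context multiloop_with_ideal begin

abbreviation "Iassoc \<equiv> assoc_ideal sc N m B I"
abbreviation "gens \<equiv>
  {proj sc N m B (cls N m k) v X | k v X. valid_exp N k \<and> v \<in> B (cls N m k) \<and> X \<in> I}"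

lemma assoc_eq_gen_ideal: "Iassoc = gen_ideal N gens" by (simp add: assoc_ideal_def)

lemma proj_nz: "proj sc N m B c v X k \<noteq> 0 \<Longrightarrow> valid_exp N k \<and> cls N m k = c \<and> X k \<noteq> 0"
  by (auto simp: proj_def V.representation_zero split: if_splits)

lemma proj_laurent: assumes X: "X \<in> I" shows "proj sc N m B c v X \<in> laurent N"
proof -
  have "{k. proj sc N m B c v X k \<noteq> 0} \<subseteq> {k. X k \<noteq> 0}" using proj_nz by blast
  then show ?thesis unfolding laurent_def using L_fin I_L X proj_nz by (auto intro: finite_subset)
qed

lemma assoc_ideal_ring: "ring_ideal N Iassoc"
  unfolding assoc_eq_gen_ideal by (rule gen_ideal_ideal) (use proj_laurent in blast)

lemma gens_sub_assoc: "gens \<subseteq> Iassoc"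
  unfolding assoc_eq_gen_ideal by (rule gen_ideal_sub)

definition hom_part :: "(nat \<Rightarrow> int) \<Rightarrow> ((nat \<Rightarrow> int) \<Rightarrow> 'f) \<Rightarrow> (nat \<Rightarrow> int) \<Rightarrow> 'f" where
  "hom_part c f = (\<lambda>k. if cls N m k = c then f k else 0)"

lemma hom_part_zero: "hom_part c (\<lambda>_. 0) = (\<lambda>_. 0)" by (simp add: hom_part_def)

lemma hom_part_add: "hom_part c (\<lambda>k. f k + g k) = (\<lambda>k. hom_part c f k + hom_part c g k)"
  by (auto simp: hom_part_def)

lemma hom_part_laurent: "f \<in> laurent N \<Longrightarrow> hom_part c f \<in> laurent N"
proof -
  assume f: "f \<in> laurent N"
  have "{k. hom_part c f k \<noteq> 0} \<subseteq> {k. f k \<noteq> 0}" by (auto simp: hom_part_def)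
  then show ?thesis using f unfolding laurent_def by (auto simp: hom_part_def intro: finite_subset)
qed

lemma hom_part_lmult_shift:
  assumes c: "c \<in> classes"
  shows "hom_part c (lmult f g) (\<lambda>i. k i - a i) =
    (\<Sum>b\<in>{b. f b \<noteq> 0}. f b * hom_part (cls N m (\<lambda>i. c i - b i)) g (\<lambda>i. k i - (a i + b i)))"
proof -
  have cond: "cls N m (\<lambda>i. k i - (a i + b i)) = cls N m (\<lambda>i. c i - b i) \<longleftrightarrow>
      cls N m (\<lambda>i. k i - a i) = c" for b
  proof -
    have "(\<lambda>i. k i - (a i + b i)) = (\<lambda>i. (k i - a i) - b i)" by (simp add: algebra_simps)
    then show ?thesis using cls_shift_iff[OF c, of "\<lambda>i. k i - a i" b] by simp
  qed
  have sh: "(\<lambda>i. k i - a i - b i) = (\<lambda>i. k i - (a i + b i))" for b by (simp add: algebra_simps)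
  show ?thesis
  proof (cases "cls N m (\<lambda>i. k i - a i) = c")
    case True
    then show ?thesis using cond by (simp add: hom_part_def lmult_def sh)
  next
    case False
    then show ?thesis using cond by (simp add: hom_part_def)
  qed
qed

lemma hom_part_proj: assumes "c0 = cls N m k0"
  shows "hom_part c (proj sc N m B c0 v X) = (if c = c0 then proj sc N m B c0 v X else (\<lambda>_. 0))"
proof
  fix k show "hom_part c (proj sc N m B c0 v X) k = (if c = c0 then proj sc N m B c0 v X else (\<lambda>_. 0)) k"
    using proj_nz[of c0 v X k] by (auto simp: hom_part_def)
qed

definition Jact :: "((nat \<Rightarrow> int) \<Rightarrow> 'f) set" where
  "Jact = {f \<in> laurent N. \<forall>c\<in>classes. \<forall>d\<in>classes. \<forall>w\<in>gc d. \<forall>a. valid_exp N a \<longrightarrow>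
      cls N m a = cls N m (\<lambda>i. d i - c i) \<longrightarrow> tns sc w (shift a (hom_part c f)) \<in> I}"

(* Jact is closed under multiplication by R: w \<otimes> t^a (f g)_c is a linear combination of
   the w \<otimes> t^{a+b} g_{c-b}, which lie in \<I> since a + b \<equiv> d - (c - b). *)
lemma Jact_lmult:
  assumes fl: "f \<in> laurent N" and g: "g \<in> Jact"
  shows "lmult f g \<in> Jact"
proof -
  have gl: "g \<in> laurent N" using g by (auto simp: Jact_def)
  have "tns sc w (shift a (hom_part c (lmult f g))) \<in> I"
    if c: "c \<in> classes" and d: "d \<in> classes" and w: "w \<in> gc d" and a: "valid_exp N a"
       and ca: "cls N m a = cls N m (\<lambda>i. d i - c i)" for c d w a
  proof -
    have eq: "tns sc w (shift a (hom_part c (lmult f g))) = (\<lambda>k. \<Sum>b\<in>{b. f b \<noteq> 0}.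
        sc (f b) (tns sc w (shift (\<lambda>i. a i + b i) (hom_part (cls N m (\<lambda>i. c i - b i)) g)) k))"
      by (simp add: tns_def shift_def hom_part_lmult_shift[OF c] V.scale_sum_left V.scale_scale)
    have fin: "finite {b. f b \<noteq> 0}" using fl by (simp add: laurent_def)
    show ?thesis unfolding eq
    proof (rule I_sum[OF fin], rule I_scale)
      fix b assume "b \<in> {b. f b \<noteq> 0}"
      then have bv: "valid_exp N b" using fl by (auto simp: laurent_def)
      let ?c' = "cls N m (\<lambda>i. c i - b i)"
      have "cls N m (\<lambda>i. a i + b i) = cls N m (\<lambda>i. (d i - c i) + b i)"
        by (rule cls_add_cong[OF ca refl])
      also have "\<dots> = cls N m (\<lambda>i. d i - (c i - b i))" by (simp add: algebra_simps)
      also have "\<dots> = cls N m (\<lambda>i. d i - ?c' i)" by (rule cls_diff_cong[OF refl]) simp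
      finally show "tns sc w (shift (\<lambda>i. a i + b i) (hom_part ?c' g)) \<in> I"
        using g cls_in_classes d w valid_add[OF a bv] by (simp add: Jact_def)
    qed
  qed
  then show ?thesis using laurent_lmult[OF fl gl] by (simp add: Jact_def)
qed

lemma Jact_ideal: "ring_ideal N Jact"
  unfolding ring_ideal_def
proof (intro conjI ballI)
  show "Jact \<subseteq> laurent N" by (auto simp: Jact_def)
  show "(\<lambda>_. 0) \<in> Jact"
    by (simp add: Jact_def hom_part_zero shift_def tns_zero I_zero laurent_def)
next
  fix f g assume f: "f \<in> Jact" and g: "g \<in> Jact"
  have "tns sc w (shift a (hom_part c (\<lambda>k. f k + g k))) =
     (\<lambda>k. tns sc w (shift a (hom_part c f)) k + tns sc w (shift a (hom_part c g)) k)" for w a c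
    by (auto simp: tns_def shift_def hom_part_def V.scale_left_distrib)
  moreover have "(\<lambda>k. f k + g k) \<in> laurent N" using f g laurent_add by (auto simp: Jact_def)
  ultimately show "(\<lambda>k. f k + g k) \<in> Jact" using f g by (auto simp: Jact_def I_add)
next
  fix f g :: "(nat \<Rightarrow> int) \<Rightarrow> 'f" assume "f \<in> laurent N" "g \<in> Jact"
  then show "lmult f g \<in> Jact" by (rule Jact_lmult)
qed

lemma gens_Jact: "gens \<subseteq> Jact"
proof
  fix p assume "p \<in> gens"
  then obtain k0 v X where p: "p = proj sc N m B (cls N m k0) v X" and X: "X \<in> I" by blast
  let ?c0 = "cls N m k0"
  have "tns sc w (shift a (hom_part c p)) \<in> I"
    if c: "c \<in> classes" and d: "d \<in> classes" and w: "w \<in> gc d" and a: "valid_exp N a"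
       and ca: "cls N m a = cls N m (\<lambda>i. d i - c i)" for c d w a
  proof (cases "c = ?c0")
    case True
    then show ?thesis
      using generator_action[OF X cls_in_classes d w a] ca hom_part_proj[of ?c0 k0 c v X] p by simp
  next
    case False
    then have "hom_part c p = (\<lambda>_. 0)" using hom_part_proj[of ?c0 k0 c v X] p by simp
    then show ?thesis by (simp add: shift_def tns_zero I_zero)
  qed
  then show "p \<in> Jact" using proj_laurent[OF X] p by (simp add: Jact_def)
qed

lemma assoc_sub_Jact: "Iassoc \<subseteq> Jact"
  unfolding assoc_eq_gen_ideal by (rule gen_ideal_least[OF Jact_ideal gens_Jact])

definition Jgraded :: "((nat \<Rightarrow> int) \<Rightarrow> 'f) set" where
  "Jgraded = {f \<in> laurent N. \<forall>c\<in>classes. hom_part c f \<in> Iassoc}"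

lemma Jgraded_lmult:
  assumes fl: "f \<in> laurent N" and g: "g \<in> Jgraded"
  shows "lmult f g \<in> Jgraded"
proof -
  have gl: "g \<in> laurent N" using g by (auto simp: Jgraded_def)
  have "hom_part c (lmult f g) \<in> Iassoc" if c: "c \<in> classes" for c
  proof -
    have eq: "hom_part c (lmult f g) = (\<lambda>k. \<Sum>b\<in>{b. f b \<noteq> 0}.
        lmult (lmonom b (f b)) (hom_part (cls N m (\<lambda>i. c i - b i)) g) k)"
    proof
      fix k
      show "hom_part c (lmult f g) k = (\<Sum>b\<in>{b. f b \<noteq> 0}.
          lmult (lmonom b (f b)) (hom_part (cls N m (\<lambda>i. c i - b i)) g) k)"
        using hom_part_lmult_shift[OF c, of f g k "\<lambda>_. 0"] by (simp add: lmult_lmonom)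
    qed
    have fin: "finite {b. f b \<noteq> 0}" using fl by (simp add: laurent_def)
    show ?thesis unfolding eq
    proof (rule ring_ideal_sum[OF assoc_ideal_ring fin])
      fix b assume "b \<in> {b. f b \<noteq> 0}"
      then have bv: "valid_exp N b" using fl by (auto simp: laurent_def)
      have "hom_part (cls N m (\<lambda>i. c i - b i)) g \<in> Iassoc"
        using g cls_in_classes by (simp add: Jgraded_def)
      then show "lmult (lmonom b (f b)) (hom_part (cls N m (\<lambda>i. c i - b i)) g) \<in> Iassoc"
        using assoc_ideal_ring lmonom_laurent[OF bv, of "f b"] unfolding ring_ideal_def by blast
    qed
  qed
  then show ?thesis using laurent_lmult[OF fl gl] by (simp add: Jgraded_def)
qed

lemma Jgraded_ideal: "ring_ideal N Jgraded"
  unfolding ring_ideal_def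
proof (intro conjI ballI)
  show "Jgraded \<subseteq> laurent N" by (auto simp: Jgraded_def)
  show "(\<lambda>_. 0) \<in> Jgraded"
    using assoc_ideal_ring by (simp add: Jgraded_def hom_part_zero ring_ideal_def laurent_def)
next
  fix f g assume "f \<in> Jgraded" "g \<in> Jgraded"
  then show "(\<lambda>k. f k + g k) \<in> Jgraded"
    using assoc_ideal_ring laurent_add by (auto simp: Jgraded_def hom_part_add ring_ideal_def)
next
  fix f g :: "(nat \<Rightarrow> int) \<Rightarrow> 'f" assume "f \<in> laurent N" "g \<in> Jgraded"
  then show "lmult f g \<in> Jgraded" by (rule Jgraded_lmult)
qed

lemma gens_Jgraded: "gens \<subseteq> Jgraded"
proof
  fix p assume pG: "p \<in> gens"
  then obtain k0 v X where p: "p = proj sc N m B (cls N m k0) v X" and X: "X \<in> I" by blast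
  have pI: "p \<in> Iassoc" using pG gens_sub_assoc by blast
  have "hom_part c p \<in> Iassoc" for c
    using hom_part_proj[of "cls N m k0" k0 c v X] p pI assoc_ideal_ring by (auto simp: ring_ideal_def)
  then show "p \<in> Jgraded" using proj_laurent[OF X] p by (simp add: Jgraded_def)
qed

lemma assoc_sub_Jgraded: "Iassoc \<subseteq> Jgraded"
  unfolding assoc_eq_gen_ideal by (rule gen_ideal_least[OF Jgraded_ideal gens_Jgraded])

end

context multiloop_with_ideal begin

lemma basis_expansion:
  assumes YL: "Y \<in> L"
  shows "Y = (\<lambda>k. \<Sum>cv\<in>Sigma classes B. tns sc (snd cv) (proj sc N m B (fst cv) (snd cv) Y) k)"
proof
  fix k
  have fb: "\<forall>c\<in>classes. finite (B c)" using B_finite by blast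
  have "(\<Sum>cv\<in>Sigma classes B. tns sc (snd cv) (proj sc N m B (fst cv) (snd cv) Y) k) =
      (\<Sum>c\<in>classes. \<Sum>v\<in>B c. sc (proj sc N m B c v Y k) v)"
    unfolding tns_def by (subst sum.Sigma[OF finite_classes fb]) (simp add: case_prod_beta)
  also have "\<dots> = Y k"
  proof (cases "valid_exp N k")
    case True
    let ?c = "cls N m k"
    have "(\<Sum>c\<in>classes. \<Sum>v\<in>B c. sc (proj sc N m B c v Y k) v) =
        (\<Sum>c\<in>classes. if c = ?c then (\<Sum>v\<in>B c. sc (V.representation (B c) (Y k) v) v) else 0)"
      using True by (intro sum.cong) (auto simp: proj_def)
    also have "\<dots> = (\<Sum>v\<in>B ?c. sc (V.representation (B ?c) (Y k) v) v)"
      by (subst sum.delta[OF finite_classes]) (simp add: cls_in_classes)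
    also have "\<dots> = Y k"
    proof (rule V.sum_representation_eq)
      show "V.independent (B ?c)" using B_indep cls_in_classes by blast
      show "Y k \<in> V.span (B ?c)" using B_span[OF cls_in_classes] L_gc[OF YL] gc_cls by simp
      show "finite (B ?c)" using B_finite cls_in_classes by blast
    qed simp
    finally show ?thesis .
  next
    case False
    then show ?thesis using L_valid[OF YL False] by (simp add: proj_def)
  qed
  finally show "Y k = (\<Sum>cv\<in>Sigma classes B. tns sc (snd cv) (proj sc N m B (fst cv) (snd cv) Y) k)"
    by simp
qed

(* \<I> \<subseteq> g \<otimes> I(\<I>): the coefficients \<pi>_{c,v}(Y) are generators of I(\<I>). *)
lemma ideal_sub_tensor: assumes Y: "Y \<in> I" shows "Y \<in> g_tensor sc Iassoc"
proof -
  have "proj sc N m B c v Y \<in> gens" if c: "c \<in> classes" and v: "v \<in> B c" for c v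
    unfolding mem_Collect_eq
    by (intro exI[of _ c] exI[of _ v] exI[of _ Y]) (use classes_valid[OF c] classes_iff c v Y in simp)
  then have "proj sc N m B c v Y \<in> Iassoc" if "c \<in> classes" "v \<in> B c" for c v
    using that gens_sub_assoc by blast
  then have "(\<lambda>k. \<Sum>cv\<in>Sigma classes B. tns sc (snd cv) (proj sc N m B (fst cv) (snd cv) Y) k)
      \<in> g_tensor sc Iassoc"
    by (intro g_tensor_sumI finite_SigmaI finite_classes B_finite) auto
  then show ?thesis using basis_expansion[OF subsetD[OF I_L Y]] by simp
qed

(* An element X = \<Sum>_j x_j \<otimes> f_j of \<L> equals \<Sum>_{j,c} P_c(x_j) \<otimes> (f_j)_c, since the
   coefficient of t^k must lie in g_k. *)
lemma graded_expansion:
  assumes XL: "X \<in> L" and X: "X = (\<lambda>k. \<Sum>j<(n::nat). tns sc (xs j) (fs j) k)"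
  shows "X = (\<lambda>k. \<Sum>jc\<in>{..<n} \<times> classes.
    tns sc (gproj (snd jc) (xs (fst jc))) (hom_part (snd jc) (fs (fst jc))) k)"
proof
  fix k
  have inner: "(\<Sum>c\<in>classes. sc (hom_part c (fs j) k) (gproj c (xs j))) =
      sc (fs j k) (gproj (cls N m k) (xs j))" for j
  proof -
    have "(\<Sum>c\<in>classes. sc (hom_part c (fs j) k) (gproj c (xs j))) =
        (\<Sum>c\<in>classes. if c = cls N m k then sc (fs j k) (gproj c (xs j)) else 0)"
      by (rule sum.cong) (auto simp: hom_part_def)
    also have "\<dots> = sc (fs j k) (gproj (cls N m k) (xs j))"
      by (subst sum.delta[OF finite_classes]) (simp add: cls_in_classes)
    finally show ?thesis .
  qed
  have "(\<Sum>jc\<in>{..<n} \<times> classes. tns sc (gproj (snd jc) (xs (fst jc))) (hom_part (snd jc) (fs (fst jc))) k) =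
      (\<Sum>j<n. \<Sum>c\<in>classes. sc (hom_part c (fs j) k) (gproj c (xs j)))"
    unfolding tns_def by (subst sum.cartesian_product) (simp add: case_prod_beta)
  also have "\<dots> = gproj (cls N m k) (\<Sum>j<n. sc (fs j k) (xs j))"
    by (simp add: inner lin_sum[OF lin_gproj] lin_scale[OF lin_gproj])
  also have "(\<Sum>j<n. sc (fs j k) (xs j)) = X k" by (simp add: X tns_def)
  also have "gproj (cls N m k) (X k) = X k" using gproj_id[OF L_gc[OF XL]] .
  finally show "X k = (\<Sum>jc\<in>{..<n} \<times> classes.
    tns sc (gproj (snd jc) (xs (fst jc))) (hom_part (snd jc) (fs (fst jc))) k)" by simp
qed

(* \<L> \<inter> (g \<otimes> I) \<subseteq> \<Oplus>_c g_c \<otimes> I_c, because I(\<I>) is graded. *)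
lemma tensor_sub_graded:
  assumes XL: "X \<in> L" and XT: "X \<in> g_tensor sc Iassoc"
  shows "X \<in> graded_tensor sc N m \<sigma> \<xi> Iassoc"
proof -
  obtain n xs fs where X: "X = (\<lambda>k. \<Sum>j<(n::nat). tns sc (xs j) (fs j) k)"
    and fs: "\<forall>j<n. fs j \<in> Iassoc"
    using XT unfolding g_tensor_def mem_Collect_eq by blast
  have homogeneous: "\<exists>c. valid_exp N c \<and> gproj (snd jc) (xs (fst jc)) \<in> gc c \<and>
      hom_part (snd jc) (fs (fst jc)) \<in> Iassoc \<inter> laurent_cls N m c"
    if jc: "jc \<in> {..<n} \<times> classes" for jc
  proof (intro exI conjI IntI)
    have c: "snd jc \<in> classes" and j: "fst jc < n" using jc by auto
    show "valid_exp N (snd jc)" using classes_valid[OF c] .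
    show "gproj (snd jc) (xs (fst jc)) \<in> gc (snd jc)" by (rule gproj_in)
    show "hom_part (snd jc) (fs (fst jc)) \<in> Iassoc"
      using fs j c assoc_sub_Jgraded by (auto simp: Jgraded_def)
    show "hom_part (snd jc) (fs (fst jc)) \<in> laurent_cls N m (snd jc)"
      using hom_part_laurent[of "fs (fst jc)"] fs j assoc_ideal_ring
      by (auto simp: laurent_cls_def hom_part_def ring_ideal_def)
  qed
  have "(\<lambda>k. \<Sum>jc\<in>{..<n} \<times> classes.
      tns sc (gproj (snd jc) (xs (fst jc))) (hom_part (snd jc) (fs (fst jc))) k)
      \<in> graded_tensor sc N m \<sigma> \<xi> Iassoc"
    by (rule graded_tensor_sumI) (use finite_classes homogeneous in auto)
  then show ?thesis using graded_expansion[OF XL X] by simp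
qed

(* A homogeneous pure tensor x \<otimes> f with x \<in> g_c and f \<in> I_c lies in \<I>: the case a = 0,
   d = c of the action of I(\<I>) on \<I>. *)
lemma homogeneous_tensor_in_ideal:
  assumes x: "x \<in> gc c" and f: "f \<in> Iassoc" and fc: "f \<in> laurent_cls N m c"
  shows "tns sc x f \<in> I"
proof (cases "f = (\<lambda>_. 0)")
  case True
  then show ?thesis by (simp add: tns_zero I_zero)
next
  case False
  then obtain k where "f k \<noteq> 0" by auto
  then have "cls N m k = c" using fc by (auto simp: laurent_cls_def)
  then have c: "c \<in> classes" using cls_in_classes by metis
  have "hom_part c f = f" using fc by (auto simp: laurent_cls_def hom_part_def fun_eq_iff)
  moreover have "shift (\<lambda>_. 0) f = f" by (simp add: shift_def)
  moreover have "valid_exp N (\<lambda>_. 0)" by (simp add: valid_exp_def)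
  moreover have "cls N m (\<lambda>_. 0) = cls N m (\<lambda>i. c i - c i)" by simp
  moreover have "f \<in> Jact" using f assoc_sub_Jact by blast
  ultimately have "tns sc x (shift (\<lambda>_. 0) (hom_part c f)) \<in> I"
    using c x unfolding Jact_def by blast
  then show ?thesis using \<open>hom_part c f = f\<close> \<open>shift (\<lambda>_. 0) f = f\<close> by simp
qed

lemma graded_sub_ideal: assumes Z: "Z \<in> graded_tensor sc N m \<sigma> \<xi> Iassoc" shows "Z \<in> I"
proof -
  obtain n xs fs where Z: "Z = (\<lambda>k. \<Sum>j<(n::nat). tns sc (xs j) (fs j) k)"
    and pr: "\<forall>j<n. \<exists>c. valid_exp N c \<and> xs j \<in> gc c \<and> fs j \<in> Iassoc \<inter> laurent_cls N m c"
    using assms unfolding graded_tensor_def mem_Collect_eq by blast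
  have "tns sc (xs j) (fs j) \<in> I" if "j < n" for j
  proof -
    obtain c where "xs j \<in> gc c" "fs j \<in> Iassoc" "fs j \<in> laurent_cls N m c" using pr \<open>j < n\<close> by blast
    then show ?thesis by (rule homogeneous_tensor_in_ideal)
  qed
  then show ?thesis unfolding Z by (intro I_sum) auto
qed

end

theorem proposition2p3:
  fixes sc :: "'f::field_char_0 \<Rightarrow> 'v::ab_group_add \<Rightarrow> 'v"
    and br :: "'v \<Rightarrow> 'v \<Rightarrow> 'v"
    and N :: nat and m :: "nat \<Rightarrow> nat"
    and \<sigma> :: "nat \<Rightarrow> 'v \<Rightarrow> 'v" and \<xi> :: "nat \<Rightarrow> 'f"
    and B :: "(nat \<Rightarrow> int) \<Rightarrow> 'v set"
    and \<I> :: "((nat \<Rightarrow> int) \<Rightarrow> 'v) set"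
  assumes "alg_closed_field TYPE('f)"
    and "simple_lie_algebra sc br"
    and "\<And>i. i < N \<Longrightarrow> lie_automorphism sc br (\<sigma> i)"
    and "\<And>i j. i < N \<Longrightarrow> j < N \<Longrightarrow> \<sigma> i \<circ> \<sigma> j = \<sigma> j \<circ> \<sigma> i"
    and "\<And>i. i < N \<Longrightarrow> has_order (\<sigma> i) (m i)"
    and "\<And>i. i < N \<Longrightarrow> primitive_root (\<xi> i) (m i)"
    and "\<And>k. valid_exp N k \<Longrightarrow>
           \<not> module.dependent sc (B (cls N m k)) \<and>
           module.span sc (B (cls N m k)) = g_cls sc N \<sigma> \<xi> (cls N m k)"
    and "multiloop_ideal sc br N \<sigma> \<xi> \<I>"
  shows "\<I> = multiloop sc N \<sigma> \<xi> \<inter> g_tensor sc (assoc_ideal sc N m B \<I>)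
       \<and> multiloop sc N \<sigma> \<xi> \<inter> g_tensor sc (assoc_ideal sc N m B \<I>)
           = graded_tensor sc N m \<sigma> \<xi> (assoc_ideal sc N m B \<I>)"
proof -
  have lie: "fd_lie_algebra sc br" using assms(2) by (simp add: simple_lie_algebra_def)
  then obtain Bs where Bs: "finite_dimensional_vector_space sc Bs" by (auto simp: fd_lie_algebra_def)
  interpret multiloop_with_ideal sc br Bs N m \<sigma> \<xi> B \<I>
    by (intro multiloop_with_ideal.intro multiloop_grading.intro simple_lie.intro lie_space.intro
        simple_lie_axioms.intro multiloop_grading_axioms.intro multiloop_with_ideal_axioms.intro
        Bs lie assms)
  have "\<I> \<subseteq> L \<inter> g_tensor sc Iassoc" using I_L ideal_sub_tensor by blast
  moreover have "L \<inter> g_tensor sc Iassoc \<subseteq> graded_tensor sc N m \<sigma> \<xi> Iassoc"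
    using tensor_sub_graded by blast
  moreover have "graded_tensor sc N m \<sigma> \<xi> Iassoc \<subseteq> \<I>" using graded_sub_ideal by blast
  ultimately show ?thesis by blast
qed

end
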